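(* Let $I$ be a non-empty descent set with $s=s(I)$ and Naruse-Newton coefficients $(C_0,\ldots,C_s)$, and let $a,b$ be integers with $s\ge b>a\ge 0$. Then $\frac{C_a(I)}{C_b(I)}=\frac{a!}{b!}$ if and only if $w(I)\ge b$.
   Context: Partitions are drawn as Young diagrams $\mathbb{D}(\lambda)$ in English notation; $c_{i,j}$ is the cell in row $i$, column $j$; $\lambda'$ is the conjugate partition ($\lambda'_j$ = number of cells in column $j$). The hook length $h_\lambda(c)$ is the number of cells of $\mathbb{D}(\lambda)$ weakly right of $c$ in its row or weakly below $c$ in its column (counting $c$ once). For $\mu\subseteq\lambda$, an excited diagram of $\lambda/\mu$ is a subset of $\mathbb{D}(\lambda)$ obtained from $\mathbb{D}(\mu)$ by repeatedly replacing a cell $c_{i,j}\in D$ by $c_{i+1,j+1}$, allowed iff $c_{i+1,j+1}\in\mathbb{D}(\lambda)$ and none of $c_{i,j+1},c_{i+1,j},c_{i+1,j+1}$ lies in $D$; $\mathbb{E}(\lambda/\mu)$ is their set. A ribbon with $n$ cells is read from its lower-left to its upper-right cell, each successive cell directly right of or directly above the previous; it corresponds to the set of $i\in\{1,\ldots,n-1\}$ with cell $i$ directly below cell $i+1$. A descent set is a non-empty finite set $I$ of positive integers; $\lambda^I$ is the unique partition with $\lambda^I_1=\lambda^I_2$ such that the cells $c_{i,j}\in\mathbb{D}(\lambda^I)$ with fewer than three of $c_{i,j+1},c_{i+1,j},c_{i+1,j+1}$ in $\mathbb{D}(\lambda^I)$ form a ribbon corresponding to $I$; this ribbon is $\mathbb{D}(\lambda^I)\setminus\mathbb{D}(\mu^I)$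 for a partition $\mu^I$. Let $s(I)=\lambda^I_1-1$. Naruse-Newton coefficients: every excited diagram of $\lambda^I/\mu^I$ meets row 1 in $\{c_{1,1},\ldots,c_{1,r}\}$, $0\le r\le s$; for $0\le j\le s(I)$, $C_j(I)=\sum_D\prod_{c\in D,\,c\notin\text{row }1}h_{\lambda^I}(c)$, summed over $D\in\mathbb{E}(\lambda^I/\mu^I)$ with exactly $s-j$ cells in row 1. $w(I)$ is the number of integers $j$ with $1\le j\le s(I)+1$ and $(\lambda^I)'_j=2$. *)

theory Defs
  imports Main "HOL.Real"
begin

text \<open>Cells are pairs (row, column), 1-indexed, English notation (rows increase downwards).
A partition is a weakly decreasing list of positive naturals.\<close>

type_synonym cell = "nat \<times> nat"

definition is_partition :: "nat list \<Rightarrow> bool" where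
  "is_partition lam \<longleftrightarrow> sorted_wrt (\<ge>) lam \<and> 0 \<notin> set lam"

definition part :: "nat list \<Rightarrow> nat \<Rightarrow> nat" where
  "part lam i = (if 1 \<le> i \<and> i \<le> length lam then lam ! (i - 1) else 0)"

definition diagram :: "nat list \<Rightarrow> cell set" where
  "diagram lam = {(i, j). 1 \<le> i \<and> 1 \<le> j \<and> j \<le> part lam i}"

definition conj_part :: "nat list \<Rightarrow> nat \<Rightarrow> nat" where
  "conj_part lam j = card {i. (i, j) \<in> diagram lam}"

definition hook :: "nat list \<Rightarrow> cell \<Rightarrow> nat" where
  "hook lam c = card {d \<in> diagram lam.
      (fst d = fst c \<and> snd d \<ge> snd c) \<or> (snd d = snd c \<and> fst d \<ge> fst c)}"

inductive_set excited :: "nat list \<Rightarrow> nat list \<Rightarrow> cell set set"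
  for lam mu where
  base: "diagram mu \<in> excited lam mu"
| move: "\<lbrakk> D \<in> excited lam mu; (i, j) \<in> D; (Suc i, Suc j) \<in> diagram lam;
          (i, Suc j) \<notin> D; (Suc i, j) \<notin> D; (Suc i, Suc j) \<notin> D \<rbrakk>
        \<Longrightarrow> insert (Suc i, Suc j) (D - {(i, j)}) \<in> excited lam mu"

definition ribbon_corr :: "cell set \<Rightarrow> nat set \<Rightarrow> bool" where
  "ribbon_corr S I \<longleftrightarrow> (\<exists>n f. n \<ge> 1 \<and> S = f ` {1..n} \<and>
      (\<forall>i\<in>{1..<n}. f (Suc i) = (fst (f i), Suc (snd (f i))) \<or>
                     (fst (f i) = Suc (fst (f (Suc i))) \<and> snd (f (Suc i)) = snd (f i))) \<and>
      I = {i \<in> {1..<n}. fst (f i) = Suc (fst (f (Suc i))) \<and> snd (f (Suc i)) = snd (f i)})"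

definition outer_cells :: "nat list \<Rightarrow> cell set" where
  "outer_cells lam = {(i, j) \<in> diagram lam.
      \<not> ((i, Suc j) \<in> diagram lam \<and> (Suc i, j) \<in> diagram lam \<and> (Suc i, Suc j) \<in> diagram lam)}"

definition lamI :: "nat set \<Rightarrow> nat list" where
  "lamI I = (THE lam. is_partition lam \<and> part lam 1 = part lam 2 \<and>
                      ribbon_corr (outer_cells lam) I)"

definition muI :: "nat set \<Rightarrow> nat list" where
  "muI I = (THE mu. is_partition mu \<and>
                    diagram mu = diagram (lamI I) - outer_cells (lamI I))"

definition sI :: "nat set \<Rightarrow> nat" where
  "sI I = part (lamI I) 1 - 1"

definition NN_coeff :: "nat set \<Rightarrow> nat \<Rightarrow> nat" where
  "NN_coeff I j = (\<Sum>D \<in> {D \<in> excited (lamI I) (muI I).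
                              card {c \<in> D. fst c = 1} = sI I - j}.
                     \<Prod>c \<in> {c \<in> D. fst c \<noteq> 1}. hook (lamI I) c)"

definition wI :: "nat set \<Rightarrow> nat" where
  "wI I = card {j. 1 \<le> j \<and> j \<le> sI I + 1 \<and> conj_part (lamI I) j = 2}"

end

theory Submission
  imports Defs
begin

text \<open>Write \<open>\<lambda> = \<lambda>\<^sup>I\<close> and \<open>\<mu> = \<mu>\<^sup>I\<close>, so that \<open>\<mu>\<close> is \<open>\<lambda>\<close> without its outer ribbon. Then every cell
  of an excited diagram of \<open>\<lambda>/\<mu>\<close> moves at most once, and excited diagrams correspond
  bijectively to the order ideals \<open>\<nu> \<subseteq> \<mu>\<close> of unmoved cells. Deleting the first row maps the
  ideals with \<open>m\<close> cells in row 1 onto the ideals of \<open>tl \<lambda>\<close> with at most \<open>m\<close> cells in row 1, so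
  \<open>C\<^sub>s\<^sub>-\<^sub>m\<close> is a product of row-2 hooks times a partial sum of the analogous hook sums of
  \<open>tl \<lambda>\<close>. A growth inequality for these sums, proved by induction on the number of rows, gives
  \<open>C\<^sub>j\<^sub>+\<^sub>1 \<le> (j + 1) C\<^sub>j\<close>, with equality exactly when column \<open>s + 1 - j\<close> of \<open>\<lambda>\<close> has height 2.
  As \<open>\<lambda>\<^sub>1 = \<lambda>\<^sub>2 = s + 1\<close>, the columns of height 2 among the first \<open>s + 1\<close> are the last \<open>w(I)\<close>
  ones, so \<open>C\<^sub>j / j!\<close> is constant for \<open>j \<le> w(I)\<close> and strictly decreasing afterwards.\<close>

section \<open>Partitions, diagrams and hooks\<close>

lemma initial_segment_eq_atLeastAtMost:
  fixes A :: "nat set"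
  assumes "finite A" "\<And>x. x \<in> A \<Longrightarrow> 1 \<le> x" "\<And>x y. x \<in> A \<Longrightarrow> 1 \<le> y \<Longrightarrow> y \<le> x \<Longrightarrow> y \<in> A"
  shows "A = {1..card A}"
proof (cases "A = {}")
  case False
  have "Max A \<in> A" using assms(1) False by (rule Max_in)
  have "A = {1..Max A}"
  proof
    show "A \<subseteq> {1..Max A}" using assms(1,2) Max_ge by auto
    show "{1..Max A} \<subseteq> A" using assms(3)[OF \<open>Max A \<in> A\<close>] by auto
  qed
  then show ?thesis by (metis card_atLeastAtMost diff_Suc_1)
qed simp

definition down_closed :: "cell set \<Rightarrow> bool" where
  "down_closed D \<longleftrightarrow>
     (\<forall>(i, j)\<in>D. \<forall>i' j'. 1 \<le> i' \<longrightarrow> i' \<le> i \<longrightarrow> 1 \<le> j' \<longrightarrow> j' \<le> j \<longrightarrow> (i', j') \<in> D)"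

lemma down_closedD:
  "down_closed D \<Longrightarrow> (i, j) \<in> D \<Longrightarrow> 1 \<le> i' \<Longrightarrow> i' \<le> i \<Longrightarrow> 1 \<le> j' \<Longrightarrow> j' \<le> j \<Longrightarrow> (i', j') \<in> D"
  unfolding down_closed_def by blast

lemma down_closedI:
  "(\<And>i j i' j'. (i, j) \<in> D \<Longrightarrow> 1 \<le> i' \<Longrightarrow> i' \<le> i \<Longrightarrow> 1 \<le> j' \<Longrightarrow> j' \<le> j \<Longrightarrow> (i', j') \<in> D)
    \<Longrightarrow> down_closed D"
  unfolding down_closed_def by blast

lemma down_closed_row_eq:
  assumes fin: "finite D" and pos: "\<And>i j. (i, j) \<in> D \<Longrightarrow> 1 \<le> i \<and> 1 \<le> j"
    and dc: "down_closed D"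
  shows "{j. (i, j) \<in> D} = {1..card {j. (i, j) \<in> D}}"
proof (rule initial_segment_eq_atLeastAtMost)
  have "{j. (i, j) \<in> D} \<subseteq> snd ` D" by force
  then show "finite {j. (i, j) \<in> D}" using fin finite_surj by blast
next
  fix x assume "x \<in> {j. (i, j) \<in> D}"
  then show "1 \<le> x" using pos by blast
next
  fix x y assume "x \<in> {j. (i, j) \<in> D}" "1 \<le> y" "y \<le> x"
  moreover from this have "1 \<le> i" using pos by blast
  ultimately show "y \<in> {j. (i, j) \<in> D}" using down_closedD[OF dc, of i x i y] by simp
qed

lemma down_closed_column_eq:
  assumes fin: "finite D" and pos: "\<And>i j. (i, j) \<in> D \<Longrightarrow> 1 \<le> i \<and> 1 \<le> j"
    and dc: "down_closed D"
  shows "{i. (i, j) \<in> D} = {1..card {i. (i, j) \<in> D}}"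
proof (rule initial_segment_eq_atLeastAtMost)
  have "{i. (i, j) \<in> D} \<subseteq> fst ` D" by force
  then show "finite {i. (i, j) \<in> D}" using fin finite_surj by blast
next
  fix x assume "x \<in> {i. (i, j) \<in> D}"
  then show "1 \<le> x" using pos by blast
next
  fix x y assume "x \<in> {i. (i, j) \<in> D}" "1 \<le> y" "y \<le> x"
  moreover from this have "1 \<le> j" using pos by blast
  ultimately show "y \<in> {i. (i, j) \<in> D}" using down_closedD[OF dc, of x j y j] by simp
qed

lemma part_beyond_length: "length L < i \<Longrightarrow> part L i = 0"
  unfolding part_def by simp

lemma mem_diagram: "(i, j) \<in> diagram L \<longleftrightarrow> 1 \<le> i \<and> 1 \<le> j \<and> j \<le> part L i"
  unfolding diagram_def by simp

lemma is_partition_tl: "is_partition L \<Longrightarrow> is_partition (tl L)"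
  unfolding is_partition_def by (cases L) auto

lemma part_tl: "1 \<le> i \<Longrightarrow> part (tl L) i = part L (Suc i)"
  unfolding part_def by (cases L) (auto simp: nth_tl)

lemma mem_diagram_tl: "(i, j) \<in> diagram (tl L) \<longleftrightarrow> 1 \<le> i \<and> (Suc i, j) \<in> diagram L"
  unfolding diagram_def using part_tl by auto

definition inner_diagram :: "nat list \<Rightarrow> cell set" where
  "inner_diagram L = {(i, j). 1 \<le> i \<and> 1 \<le> j \<and> (Suc i, Suc j) \<in> diagram L}"

lemma mem_inner_diagram: "(i, j) \<in> inner_diagram L \<longleftrightarrow> 1 \<le> i \<and> 1 \<le> j \<and> (Suc i, Suc j) \<in> diagram L"
  unfolding inner_diagram_def by simp

lemma mem_inner_diagram_tl: "(i, j) \<in> inner_diagram (tl L) \<longleftrightarrow> 1 \<le> i \<and> (Suc i, j) \<in> inner_diagram L"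
  by (auto simp: mem_inner_diagram mem_diagram_tl)

context
  fixes L :: "nat list"
  assumes P: "is_partition L"
begin

lemma part_pos: "1 \<le> i \<Longrightarrow> i \<le> length L \<Longrightarrow> 1 \<le> part L i"
proof -
  assume i: "1 \<le> i" "i \<le> length L"
  then have "L ! (i - 1) \<in> set L" by simp
  moreover have "0 \<notin> set L" using P unfolding is_partition_def by simp
  ultimately have "L ! (i - 1) \<noteq> 0" by metis
  then show ?thesis using i unfolding part_def by simp
qed

lemma part_antimono: "1 \<le> i \<Longrightarrow> i \<le> i' \<Longrightarrow> part L i' \<le> part L i"
proof (cases "i' \<le> length L \<and> i \<noteq> i'")
  case True
  assume "1 \<le> i" "i \<le> i'"
  have "sorted_wrt (\<ge>) L" using P unfolding is_partition_def by simp
  moreover have "i - 1 < i' - 1" "i' - 1 < length L" using True \<open>1 \<le> i\<close> \<open>i \<le> i'\<close> by auto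
  ultimately have "L ! (i' - 1) \<le> L ! (i - 1)"
    using sorted_wrt_nth_less[of "(\<ge>)" L "i - 1" "i' - 1"] by simp
  then show ?thesis using True \<open>1 \<le> i\<close> \<open>i \<le> i'\<close> unfolding part_def by simp
next
  case False
  then show "1 \<le> i \<Longrightarrow> i \<le> i' \<Longrightarrow> part L i' \<le> part L i"
    using part_beyond_length[of L i'] by fastforce
qed

lemma diagram_down_closed: "down_closed (diagram L)"
proof (rule down_closedI)
  fix i j i' j' assume "(i, j) \<in> diagram L" "1 \<le> i'" "i' \<le> i" "1 \<le> j'" "j' \<le> j"
  then show "(i', j') \<in> diagram L"
    using part_antimono[of i' i] by (simp add: mem_diagram)
qed

lemma finite_diagram: "finite (diagram L)"
proof (rule finite_subset)
  show "diagram L \<subseteq> {1..length L} \<times> {1..part L 1}"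
  proof
    fix c assume "c \<in> diagram L"
    then obtain i j where c: "c = (i, j)" "1 \<le> i" "1 \<le> j" "j \<le> part L i"
      by (cases c) (auto simp: mem_diagram)
    moreover from this have "i \<le> length L" using part_beyond_length[of L i] by fastforce
    ultimately show "c \<in> {1..length L} \<times> {1..part L 1}"
      using part_antimono[of 1 i] by auto
  qed
qed simp

lemma part_eq_card_row: "1 \<le> i \<Longrightarrow> part L i = card {j. (i, j) \<in> diagram L}"
proof -
  assume "1 \<le> i"
  then have "{j. (i, j) \<in> diagram L} = {1..part L i}" by (auto simp: mem_diagram)
  then show ?thesis by simp
qed

lemma column_eq: "{i. (i, j) \<in> diagram L} = {1..conj_part L j}"
  unfolding conj_part_def
  by (rule down_closed_column_eq[OF finite_diagram _ diagram_down_closed]) (simp add: mem_diagram)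

lemma mem_diagram_conj: "(i, j) \<in> diagram L \<longleftrightarrow> 1 \<le> i \<and> i \<le> conj_part L j"
  using column_eq[of j] by (metis atLeastAtMost_iff mem_Collect_eq)

lemma conj_part_antimono: "1 \<le> j \<Longrightarrow> j \<le> j' \<Longrightarrow> conj_part L j' \<le> conj_part L j"
proof -
  assume j: "1 \<le> j" "j \<le> j'"
  have "{i. (i, j') \<in> diagram L} \<subseteq> {i. (i, j) \<in> diagram L}"
  proof clarify
    fix i assume i: "(i, j') \<in> diagram L"
    then have "1 \<le> i" by (simp add: mem_diagram)
    then show "(i, j) \<in> diagram L" using down_closedD[OF diagram_down_closed i, of i j] j by simp
  qed
  then show ?thesis
    by (metis card_mono finite_atLeastAtMost card_atLeastAtMost diff_Suc_1 column_eq)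
qed

lemma hook_eq:
  assumes "(i, j) \<in> diagram L"
  shows "hook L (i, j) = (part L i - j) + (conj_part L j - i) + 1"
proof -
  have ij: "1 \<le> i" "1 \<le> j" "j \<le> part L i" "i \<le> conj_part L j"
    using assms mem_diagram[of i j] mem_diagram_conj[of i j] by auto
  have "{d \<in> diagram L. (fst d = i \<and> snd d \<ge> j) \<or> (snd d = j \<and> fst d \<ge> i)}
      = {i} \<times> {j..part L i} \<union> {Suc i..conj_part L j} \<times> {j}"
    (is "?H = ?R")
  proof -
    have "d \<in> ?H \<longleftrightarrow> d \<in> ?R" for d
    proof (cases d)
      case (Pair x y)
      then show ?thesis using ij mem_diagram[of x y] mem_diagram_conj[of x y] by auto
    qed
    then show ?thesis by blast
  qed
  moreover have "card ({i} \<times> {j..part L i} \<union> {Suc i..conj_part L j} \<times> {j})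
      = card {j..part L i} + card {Suc i..conj_part L j}"
    by (subst card_Un_disjoint) (auto simp: card_cartesian_product)
  ultimately show ?thesis
    using ij unfolding hook_def by simp
qed

lemma hook_pos: "c \<in> diagram L \<Longrightarrow> 0 < hook L c"
  using hook_eq by (cases c) simp

lemma mem_outer_cells: "c \<in> outer_cells L \<longleftrightarrow> c \<in> diagram L \<and> map_prod Suc Suc c \<notin> diagram L"
proof (cases c)
  case (Pair i j)
  have "(i, Suc j) \<in> diagram L \<and> (Suc i, j) \<in> diagram L"
    if "(Suc i, Suc j) \<in> diagram L" "1 \<le> i" "1 \<le> j"
    using down_closedD[OF diagram_down_closed that(1)] that(2,3) by simp
  then show ?thesis unfolding Pair outer_cells_def using mem_diagram[of i j] by auto
qed

lemma diagram_eq_left_of_outer_cells: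
  "diagram L = {(i, j). 1 \<le> j \<and> (\<exists>c\<in>outer_cells L. fst c = i \<and> j \<le> snd c)}"
proof (intro set_eqI iffI)
  fix d assume "d \<in> diagram L"
  moreover obtain i j where d: "d = (i, j)" by (cases d)
  ultimately have ij: "1 \<le> i" "1 \<le> j" "j \<le> part L i" by (auto simp: mem_diagram)
  have "(i, part L i) \<in> outer_cells L"
    using ij part_antimono[of i "Suc i"] by (simp add: mem_outer_cells mem_diagram)
  then show "d \<in> {(i, j). 1 \<le> j \<and> (\<exists>c\<in>outer_cells L. fst c = i \<and> j \<le> snd c)}"
    using d ij by force
next
  fix d assume "d \<in> {(i, j). 1 \<le> j \<and> (\<exists>c\<in>outer_cells L. fst c = i \<and> j \<le> snd c)}"
  then obtain i j k where d: "d = (i, j)" "1 \<le> j" "j \<le> k" "(i, k) \<in> outer_cells L"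
    by auto
  then have "(i, k) \<in> diagram L" by (simp add: mem_outer_cells)
  then show "d \<in> diagram L" using d by (auto simp: mem_diagram)
qed

lemma diagram_minus_outer_cells: "diagram L - outer_cells L = inner_diagram L"
proof (intro set_eqI)
  fix c :: cell
  obtain i j where c: "c = (i, j)" by (cases c)
  have "(i, j) \<in> diagram L" if "(Suc i, Suc j) \<in> diagram L" "1 \<le> i" "1 \<le> j"
    using down_closedD[OF diagram_down_closed that(1), of i j] that by simp
  then show "c \<in> diagram L - outer_cells L \<longleftrightarrow> c \<in> inner_diagram L"
    unfolding c using mem_outer_cells[of "(i, j)"] by (auto simp: mem_diagram mem_inner_diagram)
qed

lemma inner_diagram_subset: "inner_diagram L \<subseteq> diagram L"
  using diagram_minus_outer_cells by blast

lemma finite_inner_diagram: "finite (inner_diagram L)"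
  using finite_diagram inner_diagram_subset by (rule finite_subset[rotated])

lemma down_closed_inner_diagram: "down_closed (inner_diagram L)"
  by (rule down_closedI) (use down_closedD[OF diagram_down_closed] in \<open>auto simp: mem_inner_diagram\<close>)

end

lemma conj_part_tl:
  assumes "is_partition L"
  shows "conj_part (tl L) j = conj_part L j - 1"
proof -
  have "{i. (i, j) \<in> diagram (tl L)} = {1..conj_part L j - 1}"
    using mem_diagram_conj[OF assms] by (auto simp: mem_diagram_tl)
  then show ?thesis by (simp add: conj_part_def)
qed

lemma hook_tl:
  assumes P: "is_partition L" and ij: "(i, j) \<in> diagram (tl L)"
  shows "hook (tl L) (i, j) = hook L (Suc i, j)"
proof -
  have "(Suc i, j) \<in> diagram L" "1 \<le> i" using ij mem_diagram_tl by auto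
  have "hook (tl L) (i, j) = (part (tl L) i - j) + (conj_part (tl L) j - i) + 1"
    by (rule hook_eq[OF is_partition_tl[OF P] ij])
  also have "\<dots> = (part L (Suc i) - j) + (conj_part L j - Suc i) + 1"
    using part_tl[OF \<open>1 \<le> i\<close>] conj_part_tl[OF P] by simp
  also have "\<dots> = hook L (Suc i, j)"
    using hook_eq[OF P \<open>(Suc i, j) \<in> diagram L\<close>] by simp
  finally show ?thesis .
qed

section \<open>Partitions from finite down-closed sets of cells\<close>

lemma is_partition_map_upt:
  assumes antimono: "\<And>i i'. 1 \<le> i \<Longrightarrow> i \<le> i' \<Longrightarrow> i' \<le> N \<Longrightarrow> row i' \<le> row i"
    and pos: "\<And>i. 1 \<le> i \<Longrightarrow> i \<le> N \<Longrightarrow> 0 < row i"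
  shows "is_partition (map row [1..<Suc N])"
    and "part (map row [1..<Suc N]) i = (if 1 \<le> i \<and> i \<le> N then row i else 0)"
proof -
  define L where "L = map row [1..<Suc N]"
  have L_nth: "L ! k = row (Suc k)" if "k < N" for k
    using that unfolding L_def by (simp del: upt_Suc)
  have "sorted_wrt (\<ge>) L"
    unfolding sorted_wrt_iff_nth_less using antimono L_nth by (simp add: L_def del: upt_Suc)
  moreover have "0 \<notin> set L"
  proof
    assume "0 \<in> set L"
    then obtain k where "k < length L" "L ! k = 0" by (auto simp: in_set_conv_nth)
    moreover have "length L = N" by (simp add: L_def)
    ultimately show False using pos[of "Suc k"] L_nth by simp
  qed
  ultimately show "is_partition (map row [1..<Suc N])" unfolding is_partition_def L_def by simp
  show "part (map row [1..<Suc N]) i = (if 1 \<le> i \<and> i \<le> N then row i else 0)"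
    unfolding part_def by (auto simp del: upt_Suc)
qed

lemma finite_down_closed_is_diagram:
  assumes fin: "finite D" and pos: "\<And>i j. (i, j) \<in> D \<Longrightarrow> 1 \<le> i \<and> 1 \<le> j"
    and dc: "down_closed D"
  obtains L where "is_partition L" "diagram L = D"
proof -
  define row where "row i = card {j. (i, j) \<in> D}" for i
  define N where "N = card {i. (i, 1) \<in> D}"
  have rows: "{j. (i, j) \<in> D} = {1..row i}" for i
    unfolding row_def by (rule down_closed_row_eq[OF fin pos dc])
  have col: "{i. (i, 1) \<in> D} = {1..N}"
    unfolding N_def by (rule down_closed_column_eq[OF fin pos dc])
  have memD: "(i, j) \<in> D \<longleftrightarrow> 1 \<le> i \<and> i \<le> N \<and> 1 \<le> j \<and> j \<le> row i" for i j
  proof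
    assume ij: "(i, j) \<in> D"
    then have "(i, 1) \<in> D" using pos down_closedD[OF dc ij, of i 1] by simp
    then show "1 \<le> i \<and> i \<le> N \<and> 1 \<le> j \<and> j \<le> row i"
      using col rows[of i] ij by auto
  next
    assume "1 \<le> i \<and> i \<le> N \<and> 1 \<le> j \<and> j \<le> row i"
    then show "(i, j) \<in> D" using rows[of i] by auto
  qed
  have antimono: "row i' \<le> row i" if "1 \<le> i" "i \<le> i'" "i' \<le> N" for i i'
  proof -
    have "{j. (i', j) \<in> D} \<subseteq> {j. (i, j) \<in> D}"
    proof
      fix j assume "j \<in> {j. (i', j) \<in> D}"
      then have "(i', j) \<in> D" "1 \<le> j" using pos by auto
      then show "j \<in> {j. (i, j) \<in> D}" using down_closedD[OF dc, of i' j i j] that by simp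
    qed
    then show ?thesis using rows by (metis card_mono finite_atLeastAtMost card_atLeastAtMost diff_Suc_1)
  qed
  have row_pos: "0 < row i" if "1 \<le> i" "i \<le> N" for i
    using memD[of i 1] col that by auto
  note L = is_partition_map_upt[of N row, OF antimono row_pos]
  have "diagram (map row [1..<Suc N]) = D"
    using memD L(2) by (auto simp: mem_diagram split: if_splits)
  with L(1) show thesis by (rule that)
qed

lemma diagram_inject:
  assumes "is_partition L" "is_partition L'" "diagram L = diagram L'"
  shows "L = L'"
proof -
  have first_column: "{i. (i, 1) \<in> diagram M} = {1..length M}" if "is_partition M" for M
  proof (rule set_eqI)
    fix i
    show "i \<in> {i. (i, 1) \<in> diagram M} \<longleftrightarrow> i \<in> {1..length M}"
      using part_pos[OF that, of i] part_beyond_length[of M i] by (auto simp: mem_diagram) (meson not_le)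
  qed
  have "length L = length L'"
    using first_column[OF assms(1)] first_column[OF assms(2)] assms(3)
    by (metis card_atLeastAtMost diff_Suc_1)
  moreover have "L ! k = L' ! k" if "k < length L" for k
  proof -
    have "L ! k = part L (Suc k)" "L' ! k = part L' (Suc k)"
      using that \<open>length L = length L'\<close> unfolding part_def by auto
    then show ?thesis
      using part_eq_card_row[OF assms(1), of "Suc k"] part_eq_card_row[OF assms(2), of "Suc k"] assms(3)
      by simp
  qed
  ultimately show ?thesis by (rule nth_equalityI)
qed

section \<open>The partition of a descent set\<close>

lemma card_Int_atLeastLessThan_step:
  "k < n \<Longrightarrow> card (I \<inter> {k..<n}) = card (I \<inter> {Suc k..<n}) + (if k \<in> I then 1 else 0)"
proof -
  assume "k < n"
  then have "I \<inter> {k..<n} = (if k \<in> I then insert k (I \<inter> {Suc k..<n}) else I \<inter> {Suc k..<n})"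
    by (auto simp: Suc_le_eq order.order_iff_strict)
  then show ?thesis by simp
qed

lemma card_atLeastLessThan_Diff_step:
  "card ({1..<Suc k} - I) = card ({1..<k} - I) + (if k \<in> I \<or> k = 0 then 0 else 1)"
proof -
  have "{1..<Suc k} - I = (if k \<in> I \<or> k = 0 then {1..<k} - I else insert k ({1..<k} - I))"
    by (auto simp: less_Suc_eq)
  then show ?thesis by simp
qed

definition ribbon_walk :: "nat \<Rightarrow> (nat \<Rightarrow> cell) \<Rightarrow> nat set \<Rightarrow> bool" where
  "ribbon_walk m f I \<longleftrightarrow>
     (\<forall>i\<in>{1..<m}. f (Suc i) = (fst (f i), Suc (snd (f i))) \<or>
                   (fst (f i) = Suc (fst (f (Suc i))) \<and> snd (f (Suc i)) = snd (f i))) \<and>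
     I = {i \<in> {1..<m}. fst (f i) = Suc (fst (f (Suc i))) \<and> snd (f (Suc i)) = snd (f i)}"

lemma ribbon_corr_iff_walk: "ribbon_corr S I \<longleftrightarrow> (\<exists>m f. 1 \<le> m \<and> S = f ` {1..m} \<and> ribbon_walk m f I)"
  unfolding ribbon_corr_def ribbon_walk_def by blast

context
  fixes m f I
  assumes walk: "ribbon_walk m f I"
begin

lemma ribbon_walk_subset: "I \<subseteq> {1..<m}"
  using walk unfolding ribbon_walk_def by blast

lemma ribbon_walk_up: "i \<in> I \<Longrightarrow> f (Suc i) = (fst (f i) - 1, snd (f i)) \<and> 1 \<le> fst (f i)"
  using walk unfolding ribbon_walk_def by (auto simp: prod_eq_iff)

lemma ribbon_walk_right: "i \<in> {1..<m} \<Longrightarrow> i \<notin> I \<Longrightarrow> f (Suc i) = (fst (f i), Suc (snd (f i)))"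
  using walk unfolding ribbon_walk_def by blast

lemma ribbon_walk_mono:
  assumes "1 \<le> a" "a \<le> b" "b \<le> m"
  shows "fst (f b) \<le> fst (f a) \<and> snd (f a) \<le> snd (f b)"
  using assms(2,3)
proof (induction b rule: dec_induct)
  case (step b)
  then have "b \<in> {1..<m}" using assms(1) by simp
  then show ?case
    using step ribbon_walk_up[of b] ribbon_walk_right[of b] by (cases "b \<in> I") auto
qed simp

lemma ribbon_walk_eq:
  assumes start: "snd (f 1) = 1" and finish: "fst (f m) = 1" and k: "1 \<le> k" "k \<le> m"
  shows "f k = (1 + card (I \<inter> {k..<m}), 1 + card ({1..<k} - I))"
proof -
  have "snd (f k) = 1 + card ({1..<k} - I)"
    using k
  proof (induction k rule: dec_induct)
    case (step k)
    then have "k \<in> {1..<m}" "k \<noteq> 0" by auto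
    then show ?case
      using step card_atLeastLessThan_Diff_step[of k I] ribbon_walk_up[of k] ribbon_walk_right[of k]
      by (cases "k \<in> I") auto
  qed (use start in simp)
  moreover have "fst (f k) = 1 + card (I \<inter> {k..<m})"
    using k(2)
  proof (induction k rule: inc_induct)
    case (step k')
    have "k' \<in> {1..<m}" using step k(1) by simp
    then show ?case
      using step card_Int_atLeastLessThan_step[of k' m I] ribbon_walk_up[of k'] ribbon_walk_right[of k']
      by (cases "k' \<in> I") auto
  qed (use finish in simp)
  ultimately show ?thesis by (simp add: prod_eq_iff)
qed

end

locale descent_set =
  fixes I :: "nat set"
  assumes finite_I: "finite I" and I_nonempty: "I \<noteq> {}" and zero_notin_I: "0 \<notin> I"
begin

definition ribbon_len :: nat where
  "ribbon_len = Suc (Max I)"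

text \<open>Ribbon cell \<open>k\<close> (counted from the lower left) lies one row below row 1 for each up-step
  \<open>i \<ge> k\<close> still to come, and one column right of column 1 for each right-step \<open>i < k\<close> taken.\<close>

definition ribbon_row :: "nat \<Rightarrow> nat" where
  "ribbon_row k = 1 + card (I \<inter> {k..<ribbon_len})"

definition ribbon_col :: "nat \<Rightarrow> nat" where
  "ribbon_col k = 1 + card ({1..<k} - I)"

definition ribbon_cell :: "nat \<Rightarrow> cell" where
  "ribbon_cell k = (ribbon_row k, ribbon_col k)"

lemma Max_I_in: "Max I \<in> I"
  using finite_I I_nonempty by simp

lemma subset_ribbon_len: "I \<subseteq> {1..<ribbon_len}"
proof
  fix x assume "x \<in> I"
  then have "x \<le> Max I" "x \<noteq> 0" using finite_I zero_notin_I by (simp, metis)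
  then show "x \<in> {1..<ribbon_len}" unfolding ribbon_len_def by simp
qed

lemma ribbon_len_ge_2: "2 \<le> ribbon_len"
  using Max_I_in zero_notin_I unfolding ribbon_len_def by (cases "Max I") auto

lemma last_step_up: "ribbon_len - 1 \<in> I"
  using Max_I_in unfolding ribbon_len_def by simp

lemma card_I_pos: "1 \<le> card I"
  using finite_I I_nonempty by (simp add: Suc_le_eq card_gt_0_iff)

lemma ribbon_row_le: "ribbon_row k \<le> 1 + card I"
  unfolding ribbon_row_def using finite_I by (simp add: card_mono)

lemma ribbon_row_antimono: "k \<le> k' \<Longrightarrow> ribbon_row k' \<le> ribbon_row k"
  unfolding ribbon_row_def using finite_I by (intro add_left_mono card_mono) auto

lemma ribbon_row_le_add: "k \<le> k' \<Longrightarrow> ribbon_row k \<le> ribbon_row k' + (k' - k)"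
proof -
  assume "k \<le> k'"
  have "card (I \<inter> {k..<ribbon_len}) \<le> card (I \<inter> {k'..<ribbon_len} \<union> {k..<k'})"
    by (rule card_mono) auto
  also have "\<dots> \<le> card (I \<inter> {k'..<ribbon_len}) + card {k..<k'}" by (rule card_Un_le)
  finally show ?thesis unfolding ribbon_row_def by simp
qed

lemma ribbon_diagonal:
  "1 \<le> k \<Longrightarrow> k \<le> ribbon_len \<Longrightarrow> ribbon_col k + card I + 1 = ribbon_row k + k"
proof (induction k rule: nat_induct_at_least)
  case base
  have "I \<inter> {1..<ribbon_len} = I" using subset_ribbon_len by auto
  then show ?case unfolding ribbon_col_def ribbon_row_def by simp
next
  case (Suc k)
  then show ?case
    using card_atLeastLessThan_Diff_step[of k I] card_Int_atLeastLessThan_step[of k ribbon_len I]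
    unfolding ribbon_col_def ribbon_row_def by auto
qed

lemma ribbon_walk_ribbon_cell: "ribbon_walk ribbon_len ribbon_cell I"
proof -
  have step: "(ribbon_cell (Suc i) = (fst (ribbon_cell i), Suc (snd (ribbon_cell i))) \<and> i \<notin> I) \<or>
      (fst (ribbon_cell i) = Suc (fst (ribbon_cell (Suc i))) \<and>
       snd (ribbon_cell (Suc i)) = snd (ribbon_cell i) \<and> i \<in> I)"
    if "i \<in> {1..<ribbon_len}" for i
    using that card_atLeastLessThan_Diff_step[of i I] card_Int_atLeastLessThan_step[of i ribbon_len I]
    unfolding ribbon_cell_def ribbon_row_def ribbon_col_def by auto
  have "I = {i \<in> {1..<ribbon_len}. fst (ribbon_cell i) = Suc (fst (ribbon_cell (Suc i))) \<and>
      snd (ribbon_cell (Suc i)) = snd (ribbon_cell i)}"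
  proof (intro set_eqI iffI)
    fix i assume "i \<in> I"
    moreover from this have "i \<in> {1..<ribbon_len}" using subset_ribbon_len by blast
    ultimately show "i \<in> {i \<in> {1..<ribbon_len}. fst (ribbon_cell i) = Suc (fst (ribbon_cell (Suc i))) \<and>
      snd (ribbon_cell (Suc i)) = snd (ribbon_cell i)}"
      using step[of i] by auto
  next
    fix i assume "i \<in> {i \<in> {1..<ribbon_len}. fst (ribbon_cell i) = Suc (fst (ribbon_cell (Suc i))) \<and>
      snd (ribbon_cell (Suc i)) = snd (ribbon_cell i)}"
    then show "i \<in> I" using step[of i] by (auto simp: prod_eq_iff)
  qed
  then show ?thesis
    unfolding ribbon_walk_def using step by blast
qed

text \<open>The cells lying weakly north-west of some ribbon cell on its diagonal
  (by \<open>ribbon_diagonal\<close>, the diagonal of ribbon cell \<open>k\<close> is \<open>j + card I + 1 = i + k\<close>).\<close>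

definition ribbon_diagram :: "cell set" where
  "ribbon_diagram = {(i, j). 1 \<le> i \<and> 1 \<le> j \<and>
     (\<exists>k. 1 \<le> k \<and> k \<le> ribbon_len \<and> j + card I + 1 = i + k \<and> i \<le> ribbon_row k)}"

lemma ribbon_diagram_left:
  assumes "(i, j) \<in> ribbon_diagram" "1 \<le> j'" "j' \<le> j"
  shows "(i, j') \<in> ribbon_diagram"
proof -
  obtain k where k: "1 \<le> i" "1 \<le> j" "1 \<le> k" "k \<le> ribbon_len" "j + card I + 1 = i + k"
      "i \<le> ribbon_row k"
    using assms(1) unfolding ribbon_diagram_def by auto
  define k' where "k' = k - (j - j')"
  have "i \<le> 1 + card I" using k ribbon_row_le[of k] by simp
  then have k': "j' + card I + 1 = i + k'" "1 \<le> k'" "k' \<le> k"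
    using k assms unfolding k'_def by auto
  then have "i \<le> ribbon_row k'" using ribbon_row_antimono[of k' k] k by simp
  then show ?thesis unfolding ribbon_diagram_def using k' k assms by auto
qed

lemma ribbon_diagram_up:
  assumes "(i, j) \<in> ribbon_diagram" "1 \<le> i'" "i' \<le> i"
  shows "(i', j) \<in> ribbon_diagram"
proof -
  obtain k where k: "1 \<le> i" "1 \<le> j" "1 \<le> k" "k \<le> ribbon_len" "j + card I + 1 = i + k"
      "i \<le> ribbon_row k"
    using assms(1) unfolding ribbon_diagram_def by auto
  define k' where "k' = k + (i - i')"
  have "ribbon_row k \<le> 1 + (ribbon_len - k)"
    using ribbon_row_le_add[of k ribbon_len] k unfolding ribbon_row_def by simp
  then have k': "k' \<le> ribbon_len" "k \<le> k'" unfolding k'_def using k assms by auto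
  then have "i' \<le> ribbon_row k'"
    using ribbon_row_le_add[of k k'] k assms unfolding k'_def by simp
  then show ?thesis
    unfolding ribbon_diagram_def using k' k assms by (auto simp: k'_def intro!: exI[of _ k'])
qed

lemma finite_ribbon_diagram: "finite ribbon_diagram"
proof (rule finite_subset)
  show "ribbon_diagram \<subseteq> {1..1 + card I} \<times> {1..ribbon_len}"
  proof
    fix c assume "c \<in> ribbon_diagram"
    then obtain i j k where "c = (i, j)" "1 \<le> i" "1 \<le> j" "k \<le> ribbon_len"
        "j + card I + 1 = i + k" "i \<le> ribbon_row k"
      unfolding ribbon_diagram_def by auto
    then show "c \<in> {1..1 + card I} \<times> {1..ribbon_len}" using ribbon_row_le[of k] by auto
  qed
qed simp

lemma down_closed_ribbon_diagram: "down_closed ribbon_diagram"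
  by (rule down_closedI) (use ribbon_diagram_left ribbon_diagram_up in blast)

lemma ribbon_diagram_row_2: "(1, j) \<in> ribbon_diagram \<longleftrightarrow> (2, j) \<in> ribbon_diagram"
proof
  assume "(1, j) \<in> ribbon_diagram"
  then obtain k where k: "1 \<le> j" "1 \<le> k" "k \<le> ribbon_len" "j + card I + 1 = 1 + k"
    unfolding ribbon_diagram_def by auto
  have "2 \<le> k" using k card_I_pos by simp
  have "ribbon_len - 1 \<in> I \<inter> {k - 1..<ribbon_len}" using last_step_up k ribbon_len_ge_2 by auto
  then have "1 \<le> card (I \<inter> {k - 1..<ribbon_len})"
    using finite_I by (metis One_nat_def Suc_leI card_gt_0_iff empty_iff finite_Int)
  then have "2 \<le> ribbon_row (k - 1)" unfolding ribbon_row_def by simp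
  then show "(2, j) \<in> ribbon_diagram"
    unfolding ribbon_diagram_def using k \<open>2 \<le> k\<close> by (auto intro!: exI[of _ "k - 1"])
qed (use ribbon_diagram_up[of 2 j 1] in simp)

lemma ribbon_diagram_outer:
  "c \<in> ribbon_diagram \<and> map_prod Suc Suc c \<notin> ribbon_diagram \<longleftrightarrow> c \<in> ribbon_cell ` {1..ribbon_len}"
proof (cases c)
  case (Pair i j)
  have "(i, j) \<in> ribbon_diagram \<and> (Suc i, Suc j) \<notin> ribbon_diagram \<longleftrightarrow>
      (\<exists>k\<in>{1..ribbon_len}. (i, j) = ribbon_cell k)"
  proof
    assume h: "(i, j) \<in> ribbon_diagram \<and> (Suc i, Suc j) \<notin> ribbon_diagram"
    then obtain k where k: "1 \<le> i" "1 \<le> j" "1 \<le> k" "k \<le> ribbon_len" "j + card I + 1 = i + k"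
        "i \<le> ribbon_row k"
      unfolding ribbon_diagram_def by auto
    have "\<not> Suc i \<le> ribbon_row k" using h k unfolding ribbon_diagram_def by auto
    then have "i = ribbon_row k" using k by simp
    moreover have "j = ribbon_col k" using ribbon_diagonal[of k] k \<open>i = ribbon_row k\<close> by simp
    ultimately show "\<exists>k\<in>{1..ribbon_len}. (i, j) = ribbon_cell k"
      using k unfolding ribbon_cell_def by auto
  next
    assume "\<exists>k\<in>{1..ribbon_len}. (i, j) = ribbon_cell k"
    then obtain k where k: "1 \<le> k" "k \<le> ribbon_len" "i = ribbon_row k" "j = ribbon_col k"
      unfolding ribbon_cell_def by auto
    have diag: "j + card I + 1 = i + k" using ribbon_diagonal[of k] k by simp
    have "(i, j) \<in> ribbon_diagram"
      unfolding ribbon_diagram_def using k diag unfolding ribbon_row_def ribbon_col_def by auto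
    moreover have "(Suc i, Suc j) \<notin> ribbon_diagram"
    proof
      assume "(Suc i, Suc j) \<in> ribbon_diagram"
      then obtain k' where "Suc j + card I + 1 = Suc i + k'" "Suc i \<le> ribbon_row k'"
        unfolding ribbon_diagram_def by auto
      then show False using diag k by simp
    qed
    ultimately show "(i, j) \<in> ribbon_diagram \<and> (Suc i, Suc j) \<notin> ribbon_diagram" by simp
  qed
  then show ?thesis unfolding Pair by auto
qed

lemma ex_lamI: "\<exists>L. is_partition L \<and> part L 1 = part L 2 \<and> ribbon_corr (outer_cells L) I"
proof -
  obtain L where P: "is_partition L" and D: "diagram L = ribbon_diagram"
    using finite_down_closed_is_diagram[OF finite_ribbon_diagram _ down_closed_ribbon_diagram]
    unfolding ribbon_diagram_def by blast
  have "part L 1 = part L 2"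
    using part_eq_card_row[OF P, of 1] part_eq_card_row[OF P, of 2] ribbon_diagram_row_2 D by simp
  moreover have "outer_cells L = ribbon_cell ` {1..ribbon_len}"
    by (rule set_eqI) (simp only: mem_outer_cells[OF P] D ribbon_diagram_outer)
  then have "ribbon_corr (outer_cells L) I"
    unfolding ribbon_corr_iff_walk using ribbon_walk_ribbon_cell ribbon_len_ge_2
    by (intro exI[of _ ribbon_len] exI[of _ ribbon_cell]) simp
  ultimately show ?thesis using P by blast
qed

end

context
  fixes L :: "nat list" and m f I
  assumes P: "is_partition L" and rows12: "part L 1 = part L 2"
    and outer: "outer_cells L = f ` {1..m}" and walk: "ribbon_walk m f I" and m: "1 \<le> m"
begin

lemma outer_walk_in_diagram: "k \<in> {1..m} \<Longrightarrow> f k \<in> diagram L"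
  using outer mem_outer_cells[OF P] by blast

lemma outer_walk_start: "snd (f 1) = 1"
proof -
  have "1 \<le> fst (f 1)" using outer_walk_in_diagram[of 1] m by (cases "f 1") (simp add: mem_diagram)
  then have "1 \<le> length L" using part_beyond_length[of L "fst (f 1)"] outer_walk_in_diagram[of 1] m
    by (cases "f 1") (fastforce simp: mem_diagram)
  then have "(length L, 1) \<in> outer_cells L"
    using part_pos[OF P, of "length L"] part_beyond_length[of L "Suc (length L)"]
    by (simp add: mem_outer_cells[OF P] mem_diagram)
  then obtain k where "k \<in> {1..m}" "f k = (length L, 1)" using outer by auto
  then show ?thesis
    using ribbon_walk_mono[OF walk, of 1 k] outer_walk_in_diagram[of 1] m
    by (cases "f 1") (auto simp: mem_diagram)
qed

lemma row_ends_1_2_outer: "(1, part L 1) \<in> outer_cells L" "(2, part L 1) \<in> outer_cells L"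
proof -
  have "1 \<le> fst (f 1)" "snd (f 1) \<le> part L (fst (f 1))"
    using outer_walk_in_diagram[of 1] m by (cases "f 1", simp add: mem_diagram)+
  then have "1 \<le> part L 1" using part_antimono[OF P, of 1 "fst (f 1)"] outer_walk_start by simp
  then show "(1, part L 1) \<in> outer_cells L" "(2, part L 1) \<in> outer_cells L"
    using rows12 part_antimono[OF P, of 2 3]
    by (simp_all add: mem_outer_cells[OF P] mem_diagram numeral_2_eq_2 numeral_3_eq_3)
qed

lemma outer_walk_finish: "fst (f m) = 1"
proof -
  obtain k where "k \<in> {1..m}" "f k = (1, part L 1)" using row_ends_1_2_outer(1) outer by auto
  then show ?thesis
    using ribbon_walk_mono[OF walk, of k m] outer_walk_in_diagram[of m] m
    by (cases "f m") (auto simp: mem_diagram)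
qed

lemma outer_walk_last_step_up: "m - 1 \<in> I" "2 \<le> m"
proof -
  obtain k where k: "k \<in> {1..m}" "f k = (2, part L 1)" using row_ends_1_2_outer(2) outer by auto
  then have "k \<le> m - 1" "2 \<le> m" using outer_walk_finish by (cases "k = m"; auto)+
  then show "2 \<le> m" by simp
  show "m - 1 \<in> I"
  proof (rule ccontr)
    assume "m - 1 \<notin> I"
    then have "f m = (fst (f (m - 1)), Suc (snd (f (m - 1))))"
      using ribbon_walk_right[OF walk, of "m - 1"] \<open>2 \<le> m\<close> by simp
    moreover have "part L 1 \<le> snd (f (m - 1))"
      using ribbon_walk_mono[OF walk, of k "m - 1"] k \<open>k \<le> m - 1\<close> by simp
    moreover have "snd (f m) \<le> part L 1"
      using outer_walk_in_diagram[of m] outer_walk_finish m by (cases "f m") (simp add: mem_diagram)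
    ultimately show False by simp
  qed
qed

end

context descent_set
begin

lemma outer_cells_eq_ribbon_cells:
  assumes P: "is_partition L" and rows12: "part L 1 = part L 2"
    and corr: "ribbon_corr (outer_cells L) I"
  shows "outer_cells L = ribbon_cell ` {1..ribbon_len}"
proof -
  obtain m f where m: "1 \<le> m" and outer: "outer_cells L = f ` {1..m}" and walk: "ribbon_walk m f I"
    using corr unfolding ribbon_corr_iff_walk by blast
  note walk_facts = outer_walk_start[OF P rows12 outer walk m] outer_walk_finish[OF P rows12 outer walk m]
    outer_walk_last_step_up[OF P rows12 outer walk m]
  have "Max I < m" using Max_I_in ribbon_walk_subset[OF walk] by auto
  moreover have "m - 1 \<le> Max I" using Max_ge[OF finite_I walk_facts(3)] .
  ultimately have "Max I = m - 1" by simp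
  then have "m = ribbon_len" unfolding ribbon_len_def using walk_facts(4) by simp
  have "f k = ribbon_cell k" if "k \<in> {1..m}" for k
  proof -
    have "f k = (1 + card (I \<inter> {k..<m}), 1 + card ({1..<k} - I))"
      using ribbon_walk_eq[OF walk walk_facts(1,2), of k] that by simp
    then show ?thesis
      unfolding ribbon_cell_def ribbon_row_def ribbon_col_def \<open>m = ribbon_len\<close> .
  qed
  then have "f ` {1..m} = ribbon_cell ` {1..m}" by (rule image_cong[OF refl])
  then show ?thesis using outer \<open>m = ribbon_len\<close> by simp
qed

lemma lamI_spec:
  "is_partition (lamI I)" "part (lamI I) 1 = part (lamI I) 2"
proof -
  have "\<exists>!L. is_partition L \<and> part L 1 = part L 2 \<and> ribbon_corr (outer_cells L) I"
  proof (rule ex_ex1I)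
    fix L L'
    assume "is_partition L \<and> part L 1 = part L 2 \<and> ribbon_corr (outer_cells L) I"
      and "is_partition L' \<and> part L' 1 = part L' 2 \<and> ribbon_corr (outer_cells L') I"
    then have "diagram L = diagram L'"
      using outer_cells_eq_ribbon_cells[of L] outer_cells_eq_ribbon_cells[of L']
        diagram_eq_left_of_outer_cells[of L] diagram_eq_left_of_outer_cells[of L'] by simp
    then show "L = L'" using diagram_inject \<open>is_partition L \<and> _\<close> \<open>is_partition L' \<and> _\<close> by blast
  qed (rule ex_lamI)
  then have "is_partition (lamI I) \<and> part (lamI I) 1 = part (lamI I) 2 \<and>
      ribbon_corr (outer_cells (lamI I)) I"
    unfolding lamI_def by (rule theI')
  then show "is_partition (lamI I)" "part (lamI I) 1 = part (lamI I) 2" by blast+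
qed

lemma diagram_muI: "diagram (muI I) = inner_diagram (lamI I)"
proof -
  have "\<exists>!M. is_partition M \<and> diagram M = diagram (lamI I) - outer_cells (lamI I)"
  proof (rule ex_ex1I)
    obtain M where "is_partition M" "diagram M = inner_diagram (lamI I)"
      using finite_down_closed_is_diagram[OF finite_inner_diagram[OF lamI_spec(1)] _
          down_closed_inner_diagram[OF lamI_spec(1)]]
      by (auto simp: mem_inner_diagram)
    then show "\<exists>M. is_partition M \<and> diagram M = diagram (lamI I) - outer_cells (lamI I)"
      using diagram_minus_outer_cells[OF lamI_spec(1)] by metis
  next
    fix M M'
    assume "is_partition M \<and> diagram M = diagram (lamI I) - outer_cells (lamI I)"
      and "is_partition M' \<and> diagram M' = diagram (lamI I) - outer_cells (lamI I)"
    then show "M = M'" using diagram_inject[of M M'] by simp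
  qed
  then have "is_partition (muI I) \<and> diagram (muI I) = diagram (lamI I) - outer_cells (lamI I)"
    unfolding muI_def by (rule theI')
  then show ?thesis using diagram_minus_outer_cells[OF lamI_spec(1)] by simp
qed

end


section \<open>Excited diagrams of a partition over its inner diagram\<close>

definition inner_ideals :: "nat list \<Rightarrow> cell set set" where
  "inner_ideals L = {\<nu>. \<nu> \<subseteq> inner_diagram L \<and> down_closed \<nu>}"

text \<open>The excited diagram in which exactly the cells of the inner diagram outside the ideal \<open>\<nu>\<close>
  have moved, each once (onto the outer ribbon).\<close>

definition excite :: "nat list \<Rightarrow> cell set \<Rightarrow> cell set" where
  "excite L \<nu> = \<nu> \<union> map_prod Suc Suc ` (inner_diagram L - \<nu>)"

lemma mem_shifted_iff:
  "(a, b) \<in> map_prod Suc Suc ` X \<longleftrightarrow> (\<exists>i j. a = Suc i \<and> b = Suc j \<and> (i, j) \<in> X)"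
  by force

lemma finite_inner_ideals: "is_partition L \<Longrightarrow> finite (inner_ideals L)"
  using finite_inner_diagram unfolding inner_ideals_def by (simp add: finite_subset[of _ "Pow _"])

lemma empty_in_inner_ideals: "{} \<in> inner_ideals L"
  unfolding inner_ideals_def down_closed_def by simp

lemma inner_diagram_in_inner_ideals: "is_partition L \<Longrightarrow> inner_diagram L \<in> inner_ideals L"
  unfolding inner_ideals_def using down_closed_inner_diagram by simp

lemma inner_ideal_pos: "\<nu> \<in> inner_ideals L \<Longrightarrow> (i, j) \<in> \<nu> \<Longrightarrow> 1 \<le> i \<and> 1 \<le> j"
  unfolding inner_ideals_def by (auto simp: mem_inner_diagram)

lemma shifted_notin_inner_ideal:
  assumes \<nu>: "\<nu> \<in> inner_ideals L" and "(i, j) \<in> \<nu>"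
  shows "(i, j) \<notin> map_prod Suc Suc ` (inner_diagram L - \<nu>)"
proof
  assume "(i, j) \<in> map_prod Suc Suc ` (inner_diagram L - \<nu>)"
  then obtain a b where ab: "(a, b) \<in> inner_diagram L" "(a, b) \<notin> \<nu>" "i = Suc a" "j = Suc b"
    by force
  have "1 \<le> a" "1 \<le> b" using ab(1) by (auto simp: mem_inner_diagram)
  then have "(a, b) \<in> \<nu>"
    using down_closedD[of \<nu> i j a b] \<nu> assms(2) ab(3,4) unfolding inner_ideals_def by simp
  then show False using ab(2) by simp
qed

lemma excite_subset_diagram:
  assumes P: "is_partition L" and \<nu>: "\<nu> \<in> inner_ideals L"
  shows "excite L \<nu> \<subseteq> diagram L"
  using \<nu> inner_diagram_subset[OF P] unfolding excite_def inner_ideals_def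
  by (auto simp: mem_inner_diagram)

lemma excite_move_in_ideal:
  assumes \<nu>: "\<nu> \<in> inner_ideals L" and ij: "(i, j) \<in> \<nu>"
    and free: "(i, Suc j) \<notin> excite L \<nu>" "(Suc i, j) \<notin> excite L \<nu>"
  shows "\<nu> - {(i, j)} \<in> inner_ideals L"
    and "insert (Suc i, Suc j) (excite L \<nu> - {(i, j)}) = excite L (\<nu> - {(i, j)})"
proof -
  have sub: "\<nu> \<subseteq> inner_diagram L" and dc: "down_closed \<nu>" using \<nu> unfolding inner_ideals_def by auto
  have "down_closed (\<nu> - {(i, j)})"
  proof (rule down_closedI)
    fix a b a' b' assume h: "(a, b) \<in> \<nu> - {(i, j)}" "1 \<le> a'" "a' \<le> a" "1 \<le> b'" "b' \<le> b"
    have "(a', b') \<in> \<nu>" using down_closedD[OF dc _ h(2-5)] h(1) by blast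
    moreover have "(a', b') \<noteq> (i, j)"
    proof
      assume "(a', b') = (i, j)"
      then have "(Suc i, j) \<in> \<nu> \<or> (i, Suc j) \<in> \<nu>"
        using h down_closedD[OF dc, of a b "Suc i" j] down_closedD[OF dc, of a b i "Suc j"]
        by (cases "i < a") auto
      then show False using free unfolding excite_def by blast
    qed
    ultimately show "(a', b') \<in> \<nu> - {(i, j)}" by simp
  qed
  then show "\<nu> - {(i, j)} \<in> inner_ideals L" using sub unfolding inner_ideals_def by auto
  have "inner_diagram L - (\<nu> - {(i, j)}) = insert (i, j) (inner_diagram L - \<nu>)" using ij sub by auto
  moreover have "excite L \<nu> - {(i, j)} = (\<nu> - {(i, j)}) \<union> map_prod Suc Suc ` (inner_diagram L - \<nu>)"
    using shifted_notin_inner_ideal[OF \<nu> ij] unfolding excite_def by auto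
  ultimately show "insert (Suc i, Suc j) (excite L \<nu> - {(i, j)}) = excite L (\<nu> - {(i, j)})"
    unfolding excite_def by auto
qed

lemma excited_imp_excite:
  assumes "D \<in> excited L \<mu>" and \<mu>: "diagram \<mu> = inner_diagram L" and P: "is_partition L"
  shows "\<exists>\<nu>\<in>inner_ideals L. D = excite L \<nu>"
  using assms(1)
proof (induction rule: excited.induct)
  case base
  have "excite L (inner_diagram L) = inner_diagram L" unfolding excite_def by simp
  then show ?case using \<mu> inner_diagram_in_inner_ideals[OF P] by metis
next
  case (move D i j)
  then obtain \<nu> where \<nu>: "\<nu> \<in> inner_ideals L" and D: "D = excite L \<nu>" by blast
  show ?case
  proof (cases "(i, j) \<in> \<nu>")
    case True
    then show ?thesis using excite_move_in_ideal[OF \<nu> True] move.hyps(4,5) D by metis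
  next
    case False
    then obtain a b where "(a, b) \<in> inner_diagram L" "i = Suc a" "j = Suc b"
      using move.hyps(2) D unfolding excite_def by force
    then have "(i, j) \<in> inner_diagram L" using move.hyps(3) by (simp add: mem_inner_diagram)
    then have "(Suc i, Suc j) \<in> D" using False D unfolding excite_def by force
    then show ?thesis using move.hyps(6) by simp
  qed
qed

lemma excite_move_from_ideal:
  assumes \<nu>: "\<nu> \<in> inner_ideals L" and ij: "(i, j) \<in> inner_diagram L" "(i, j) \<notin> \<nu>"
    and \<nu>': "insert (i, j) \<nu> \<in> inner_ideals L"
  shows "(i, j) \<in> excite L (insert (i, j) \<nu>)"
    and "(i, Suc j) \<notin> excite L (insert (i, j) \<nu>)" "(Suc i, j) \<notin> excite L (insert (i, j) \<nu>)"
    and "(Suc i, Suc j) \<notin> excite L (insert (i, j) \<nu>)"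
    and "excite L \<nu> = insert (Suc i, Suc j) (excite L (insert (i, j) \<nu>) - {(i, j)})"
proof -
  have dc: "down_closed \<nu>" using \<nu> unfolding inner_ideals_def by simp
  have pos: "1 \<le> i" "1 \<le> j" using ij(1) by (auto simp: mem_inner_diagram)
  have below: "(a, b) \<in> \<nu>" if "(a, b) \<in> inner_diagram L" "a \<le> i" "b \<le> j" "(a, b) \<noteq> (i, j)" for a b
    using down_closedD[of "insert (i, j) \<nu>" i j a b] \<nu>' that
    unfolding inner_ideals_def by (auto simp: mem_inner_diagram)
  define E where "E = excite L (insert (i, j) \<nu>)"
  have E: "(a, b) \<in> E \<longleftrightarrow> (a, b) = (i, j) \<or> (a, b) \<in> \<nu> \<or>
      (\<exists>a0 b0. a = Suc a0 \<and> b = Suc b0 \<and> (a0, b0) \<in> inner_diagram L \<and> (a0, b0) \<noteq> (i, j) \<and> (a0, b0) \<notin> \<nu>)"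
    for a b unfolding E_def excite_def mem_shifted_iff by auto
  show "(i, j) \<in> E" using E by simp
  have notin_\<nu>: "(i, Suc j) \<notin> \<nu>" "(Suc i, j) \<notin> \<nu>" "(Suc i, Suc j) \<notin> \<nu>"
    using ij(2) down_closedD[OF dc, of _ _ i j] pos by fastforce+
  show "(i, Suc j) \<notin> E"
    using notin_\<nu>(1) below[of "i - 1" j] pos ij(1) by (auto simp: E mem_inner_diagram)
  show "(Suc i, j) \<notin> E"
    using notin_\<nu>(2) below[of i "j - 1"] pos ij(1) by (auto simp: E mem_inner_diagram)
  show "(Suc i, Suc j) \<notin> E" using notin_\<nu>(3) by (auto simp: E)
  have "(i, j) \<notin> map_prod Suc Suc ` (inner_diagram L - insert (i, j) \<nu>)"
    using below pos by (auto simp: mem_shifted_iff)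
  then have "E - {(i, j)} = \<nu> \<union> map_prod Suc Suc ` (inner_diagram L - insert (i, j) \<nu>)"
    unfolding E_def excite_def using ij(2) by auto
  moreover have "inner_diagram L - \<nu> = insert (i, j) (inner_diagram L - insert (i, j) \<nu>)"
    using ij by auto
  ultimately show "excite L \<nu> = insert (Suc i, Suc j) (E - {(i, j)})"
    unfolding excite_def by auto
qed

lemma insert_min_in_inner_ideals:
  assumes \<nu>: "\<nu> \<in> inner_ideals L" and c: "c \<in> inner_diagram L - \<nu>"
    and min: "\<And>d. d \<in> inner_diagram L - \<nu> \<Longrightarrow> fst c + snd c \<le> fst d + snd d"
    and P: "is_partition L"
  shows "insert c \<nu> \<in> inner_ideals L"
proof -
  have dc: "down_closed \<nu>" using \<nu> unfolding inner_ideals_def by simp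
  have "down_closed (insert c \<nu>)"
  proof (rule down_closedI)
    fix a b a' b' assume h: "(a, b) \<in> insert c \<nu>" "1 \<le> a'" "a' \<le> a" "1 \<le> b'" "b' \<le> b"
    show "(a', b') \<in> insert c \<nu>"
    proof (cases "(a, b) = c")
      case True
      have "(a', b') \<in> inner_diagram L"
        using down_closedD[OF down_closed_inner_diagram[OF P] _ h(2-5)] c True by blast
      then show ?thesis using min[of "(a', b')"] True h by fastforce
    next
      case False
      then show ?thesis using down_closedD[OF dc _ h(2-5)] h(1) by blast
    qed
  qed
  then show ?thesis using \<nu> c unfolding inner_ideals_def by auto
qed

text \<open>Induction on the number of moved cells: the moved cell with least \<open>i + j\<close> can be moved last.\<close>

lemma excite_imp_excited:
  assumes \<mu>: "diagram \<mu> = inner_diagram L" and P: "is_partition L"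
  shows "\<nu> \<in> inner_ideals L \<Longrightarrow> excite L \<nu> \<in> excited L \<mu>"
proof (induction "card (inner_diagram L - \<nu>)" arbitrary: \<nu> rule: less_induct)
  case less
  show ?case
  proof (cases "\<nu> = inner_diagram L")
    case True
    then show ?thesis using \<mu> excited.base[of \<mu> L] unfolding excite_def by simp
  next
    case False
    define S where "S = inner_diagram L - \<nu>"
    have S: "finite S" "S \<noteq> {}"
      using finite_inner_diagram[OF P] False less.prems unfolding S_def inner_ideals_def by auto
    define c where "c = arg_min_on (\<lambda>d. fst d + snd d) S"
    have c: "c \<in> S" unfolding c_def by (rule arg_min_if_finite(1)[OF S])
    have min: "fst c + snd c \<le> fst d + snd d" if "d \<in> S" for d
      unfolding c_def by (rule arg_min_least[OF S that])
    obtain i j where ij: "c = (i, j)" by (cases c)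
    have \<nu>': "insert c \<nu> \<in> inner_ideals L"
      using insert_min_in_inner_ideals[OF less.prems _ _ P] c min unfolding S_def by blast
    have "inner_diagram L - insert c \<nu> \<subset> inner_diagram L - \<nu>" using c unfolding S_def by auto
    then have "card (inner_diagram L - insert c \<nu>) < card (inner_diagram L - \<nu>)"
      using finite_inner_diagram[OF P] by (simp add: psubset_card_mono)
    then have "excite L (insert c \<nu>) \<in> excited L \<mu>" using less.hyps \<nu>' by blast
    then show ?thesis
      using excite_move_from_ideal[OF less.prems _ _ \<nu>'[unfolded ij]] c excited.move[of _ L \<mu> i j]
        mem_inner_diagram[of i j L] unfolding S_def ij by (metis Diff_iff)
  qed
qed

lemma excited_eq_excite_image:
  assumes "diagram \<mu> = inner_diagram L" and "is_partition L"
  shows "excited L \<mu> = excite L ` inner_ideals L"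
  using excited_imp_excite[OF _ assms] excite_imp_excited[OF assms] by blast

lemma inj_on_excite: "inj_on (excite L) (inner_ideals L)"
proof -
  have sub: "\<nu>1 \<subseteq> \<nu>2"
    if \<nu>1: "\<nu>1 \<in> inner_ideals L" and eq: "excite L \<nu>1 = excite L \<nu>2" for \<nu>1 \<nu>2
  proof -
    have "\<forall>j. (i, j) \<in> \<nu>1 \<longrightarrow> (i, j) \<in> \<nu>2" for i
    proof (induction i rule: less_induct)
      case (less i)
      show ?case
      proof (intro allI impI)
        fix j assume ij: "(i, j) \<in> \<nu>1"
        show "(i, j) \<in> \<nu>2"
        proof (rule ccontr)
          assume "(i, j) \<notin> \<nu>2"
          moreover have "(i, j) \<in> excite L \<nu>2" using eq ij unfolding excite_def by auto
          ultimately obtain a b where ab: "i = Suc a" "j = Suc b" "(a, b) \<in> inner_diagram L" "(a, b) \<notin> \<nu>2"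
            unfolding excite_def by force
          have "1 \<le> a" "1 \<le> b" using ab(3) by (auto simp: mem_inner_diagram)
          then have "(a, b) \<in> \<nu>1"
            using down_closedD[of \<nu>1 i j a b] \<nu>1 ij ab(1,2) unfolding inner_ideals_def by simp
          then show False using less.IH[of a] ab by simp
        qed
      qed
    qed
    then show ?thesis by auto
  qed
  show ?thesis by (rule inj_onI) (use sub in blast)
qed


section \<open>Splitting off the first row\<close>

definition row1_len :: "cell set \<Rightarrow> nat" where
  "row1_len \<nu> = card {c \<in> \<nu>. fst c = 1}"

definition hook_sum :: "nat list \<Rightarrow> nat \<Rightarrow> nat" where
  "hook_sum L m = (\<Sum>\<nu> \<in> {\<nu> \<in> inner_ideals L. row1_len \<nu> = m}. \<Prod>c \<in> excite L \<nu>. hook L c)"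

text \<open>By \<open>excited_hook_sum_eq_lower_hook_sum\<close>, \<open>C\<^sub>j(I)\<close> is \<open>lower_hook_sum \<lambda>\<^sup>I (s(I) - j)\<close>;
  \<open>hook_sum\<close> also includes the hooks of row 1.\<close>

definition lower_hook_sum :: "nat list \<Rightarrow> nat \<Rightarrow> nat" where
  "lower_hook_sum L m =
     (\<Sum>\<nu> \<in> {\<nu> \<in> inner_ideals L. row1_len \<nu> = m}. \<Prod>c \<in> {c \<in> excite L \<nu>. fst c \<noteq> 1}. hook L c)"

definition row1_hooks :: "nat list \<Rightarrow> nat \<Rightarrow> nat" where
  "row1_hooks L m = (\<Prod>j \<in> {1..m}. hook L (1, j))"

definition row2_hooks :: "nat list \<Rightarrow> nat \<Rightarrow> nat" where
  "row2_hooks L m = (\<Prod>j \<in> {m + 2..part L 2}. hook L (2, j))"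

lemma row1_hooks_Suc: "row1_hooks L (Suc m) = row1_hooks L m * hook L (1, Suc m)"
  unfolding row1_hooks_def by simp

lemma row2_hooks_step: "m + 2 \<le> part L 2 \<Longrightarrow> row2_hooks L m = hook L (2, m + 2) * row2_hooks L (Suc m)"
  unfolding row2_hooks_def by (subst prod.atLeast_Suc_atMost) simp_all

lemma row2_hooks_pos: "is_partition L \<Longrightarrow> 0 < row2_hooks L m"
  unfolding row2_hooks_def by (rule prod_pos) (auto intro: hook_pos simp: mem_diagram)

lemma excite_row1: "{c \<in> excite L \<nu>. fst c = 1} = {c \<in> \<nu>. fst c = 1}"
  unfolding excite_def by (auto simp: mem_inner_diagram)

context
  fixes L :: "nat list"
  assumes P: "is_partition L"
begin

lemma inner_ideal_row1:
  assumes \<nu>: "\<nu> \<in> inner_ideals L"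
  shows "(1, j) \<in> \<nu> \<longleftrightarrow> 1 \<le> j \<and> j \<le> row1_len \<nu>"
proof -
  have sub: "\<nu> \<subseteq> inner_diagram L" and dc: "down_closed \<nu>" using \<nu> unfolding inner_ideals_def by auto
  have "{c \<in> \<nu>. fst c = 1} = Pair 1 ` {j. (1, j) \<in> \<nu>}" by force
  then have len: "row1_len \<nu> = card {j. (1, j) \<in> \<nu>}"
    unfolding row1_len_def by (simp add: card_image inj_on_def)
  have "finite \<nu>" using finite_inner_diagram[OF P] sub by (rule finite_subset[rotated])
  then have "{j. (1, j) \<in> \<nu>} = {1..card {j. (1, j) \<in> \<nu>}}"
    by (rule down_closed_row_eq[OF _ _ dc]) (use inner_ideal_pos[OF \<nu>] in blast)
  then show ?thesis using len by (metis atLeastAtMost_iff mem_Collect_eq)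
qed

lemma row1_len_less:
  assumes "\<nu> \<in> inner_ideals L" "1 \<le> row1_len \<nu>"
  shows "row1_len \<nu> < part L 2"
proof -
  have "(1, row1_len \<nu>) \<in> inner_diagram L"
    using assms inner_ideal_row1 unfolding inner_ideals_def by blast
  then show ?thesis by (simp add: mem_inner_diagram mem_diagram numeral_2_eq_2)
qed

lemma hook_sum_eq_0:
  assumes "1 \<le> m" "part L 2 \<le> m"
  shows "hook_sum L m = 0"
proof -
  have "{\<nu> \<in> inner_ideals L. row1_len \<nu> = m} = {}" using row1_len_less assms by fastforce
  then show ?thesis unfolding hook_sum_def by (simp only: sum.empty)
qed

lemma hook_sum_0_pos: "0 < hook_sum L 0"
proof -
  have "0 < (\<Prod>c \<in> excite L {}. hook L c)"
    using excite_subset_diagram[OF P empty_in_inner_ideals] hook_pos[OF P] by (intro prod_pos) blast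
  also have "\<dots> \<le> hook_sum L 0"
    unfolding hook_sum_def using empty_in_inner_ideals finite_inner_ideals[OF P]
    by (intro member_le_sum) (auto simp: row1_len_def)
  finally show ?thesis .
qed

lemma hook_sum_eq_row1_hooks: "hook_sum L m = row1_hooks L m * lower_hook_sum L m"
proof -
  have "(\<Prod>c \<in> excite L \<nu>. hook L c) = row1_hooks L m * (\<Prod>c \<in> {c \<in> excite L \<nu>. fst c \<noteq> 1}. hook L c)"
    if \<nu>: "\<nu> \<in> inner_ideals L" "row1_len \<nu> = m" for \<nu>
  proof -
    have fin: "finite (excite L \<nu>)"
      using excite_subset_diagram[OF P \<nu>(1)] finite_diagram[OF P] by (rule finite_subset)
    have "{c \<in> excite L \<nu>. fst c = 1} = Pair 1 ` {1..m}"
      using excite_row1 inner_ideal_row1[OF \<nu>(1)] \<nu>(2) by force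
    then have "(\<Prod>c \<in> {c \<in> excite L \<nu>. fst c = 1}. hook L c) = row1_hooks L m"
      unfolding row1_hooks_def by (simp add: prod.reindex inj_on_def)
    moreover have "(\<Prod>c \<in> excite L \<nu>. hook L c) =
        (\<Prod>c \<in> {c \<in> excite L \<nu>. fst c = 1}. hook L c) * (\<Prod>c \<in> {c \<in> excite L \<nu>. fst c \<noteq> 1}. hook L c)"
      using fin by (subst prod.union_disjoint[symmetric]) (auto intro: prod.cong)
    ultimately show ?thesis by simp
  qed
  then show ?thesis unfolding hook_sum_def lower_hook_sum_def by (simp add: sum_distrib_left)
qed

end


lemma cell_row_cases:
  obtains (row0) j where "c = (0, j)" | (row1) j where "c = (1, j)"
    | (lower) i j where "c = (Suc i, j)" "1 \<le> i"
proof (cases c)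
  case (Pair a j)
  show thesis
  proof (cases a)
    case 0
    then show ?thesis using Pair row0 by simp
  next
    case (Suc i)
    then show ?thesis using Pair row1 lower by (cases i) auto
  qed
qed

lemma Suc_mem_apfst_Suc_image [simp]: "(Suc a, b) \<in> apfst Suc ` X \<longleftrightarrow> (a, b) \<in> X"
  by (auto simp: image_iff apfst_def map_prod_def split: prod.splits)

lemma zero_notin_apfst_Suc_image [simp]: "(0, b) \<notin> apfst Suc ` X"
  by (auto simp: apfst_def map_prod_def split: prod.splits)

lemma map_prod_Suc_row1_tl:
  "map_prod Suc Suc ` ({1} \<times> A \<union> apfst Suc ` X) = {2} \<times> Suc ` A \<union> apfst Suc ` map_prod Suc Suc ` X"
proof -
  have "map_prod Suc Suc \<circ> apfst Suc = apfst Suc \<circ> map_prod Suc Suc" by auto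
  then show ?thesis by (simp add: image_Un map_prod_surj_on image_comp numeral_2_eq_2)
qed

definition drop_row1 :: "cell set \<Rightarrow> cell set" where
  "drop_row1 \<nu> = {(i, j). 1 \<le> i \<and> (Suc i, j) \<in> \<nu>}"

definition add_row1 :: "nat \<Rightarrow> cell set \<Rightarrow> cell set" where
  "add_row1 m \<nu> = {1} \<times> {1..m} \<union> apfst Suc ` \<nu>"

lemma inner_diagram_eq_row1_tl:
  assumes P: "is_partition L"
  shows "inner_diagram L = {1} \<times> {1..part L 2 - 1} \<union> apfst Suc ` inner_diagram (tl L)"
proof (rule set_eqI)
  fix c :: cell
  show "c \<in> inner_diagram L \<longleftrightarrow> c \<in> {1} \<times> {1..part L 2 - 1} \<union> apfst Suc ` inner_diagram (tl L)"
    by (cases c rule: cell_row_cases)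
      (auto simp: mem_inner_diagram mem_diagram part_tl numeral_2_eq_2)
qed

lemma mem_add_row1:
  "(i, j) \<in> add_row1 m \<nu> \<longleftrightarrow> (i = 1 \<and> 1 \<le> j \<and> j \<le> m) \<or> (\<exists>i0. i = Suc i0 \<and> (i0, j) \<in> \<nu>)"
  by (cases i) (auto simp: add_row1_def)

context
  fixes L :: "nat list"
  assumes P: "is_partition L"
begin

lemma drop_row1_in_inner_ideals:
  assumes \<nu>: "\<nu> \<in> inner_ideals L"
  shows "drop_row1 \<nu> \<in> inner_ideals (tl L)" "row1_len (drop_row1 \<nu>) \<le> row1_len \<nu>"
proof -
  have dc: "down_closed \<nu>" and sub: "\<nu> \<subseteq> inner_diagram L" using \<nu> unfolding inner_ideals_def by auto
  have "down_closed (drop_row1 \<nu>)"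
  proof (rule down_closedI)
    fix i j i' j' assume h: "(i, j) \<in> drop_row1 \<nu>" "1 \<le> i'" "i' \<le> i" "1 \<le> j'" "j' \<le> j"
    then have "(Suc i', j') \<in> \<nu>"
      using down_closedD[OF dc, of "Suc i" j "Suc i'" j'] by (simp add: drop_row1_def)
    then show "(i', j') \<in> drop_row1 \<nu>" using h(2) by (simp add: drop_row1_def)
  qed
  moreover have "drop_row1 \<nu> \<subseteq> inner_diagram (tl L)"
    using sub by (auto simp: drop_row1_def mem_inner_diagram_tl)
  ultimately show dn: "drop_row1 \<nu> \<in> inner_ideals (tl L)" unfolding inner_ideals_def by simp
  have "(1, j) \<in> \<nu>" if "(1, j) \<in> drop_row1 \<nu>" for j
    using that down_closedD[OF dc, of 2 j 1 j] inner_ideal_pos[OF dn that]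
    by (simp add: drop_row1_def numeral_2_eq_2)
  then have "j \<le> row1_len \<nu>" if "1 \<le> j" "j \<le> row1_len (drop_row1 \<nu>)" for j
    using that inner_ideal_row1[OF is_partition_tl[OF P] dn] inner_ideal_row1[OF P \<nu>] by blast
  then show "row1_len (drop_row1 \<nu>) \<le> row1_len \<nu>"
    by (cases "row1_len (drop_row1 \<nu>)") auto
qed

lemma add_row1_drop_row1:
  assumes \<nu>: "\<nu> \<in> inner_ideals L"
  shows "add_row1 (row1_len \<nu>) (drop_row1 \<nu>) = \<nu>"
proof (rule set_eqI)
  fix c :: cell
  show "c \<in> add_row1 (row1_len \<nu>) (drop_row1 \<nu>) \<longleftrightarrow> c \<in> \<nu>"
  proof (cases c rule: cell_row_cases)
    case (row0 j)
    then show ?thesis using inner_ideal_pos[OF \<nu>, of 0 j] by (auto simp: add_row1_def)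
  next
    case (row1 j)
    then show ?thesis using inner_ideal_row1[OF P \<nu>, of j] by (auto simp: add_row1_def drop_row1_def)
  qed (auto simp: add_row1_def drop_row1_def)
qed

lemma down_closed_add_row1:
  assumes \<nu>: "\<nu> \<in> inner_ideals (tl L)" and m: "row1_len \<nu> \<le> m"
  shows "down_closed (add_row1 m \<nu>)"
proof (rule down_closedI)
  have dc: "down_closed \<nu>" using \<nu> unfolding inner_ideals_def by auto
  fix i j i' j' assume h: "(i, j) \<in> add_row1 m \<nu>" "1 \<le> i'" "i' \<le> i" "1 \<le> j'" "j' \<le> j"
  consider "i = 1" "j \<le> m" | i0 where "i = Suc i0" "(i0, j) \<in> \<nu>"
    using h(1) unfolding mem_add_row1 by blast
  then show "(i', j') \<in> add_row1 m \<nu>"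
  proof cases
    case 1
    then show ?thesis using h(2-5) unfolding mem_add_row1 by simp
  next
    case (2 i0)
    show ?thesis
    proof (cases "i' = 1")
      case True
      have "(1, j) \<in> \<nu>" using down_closedD[OF dc 2(2), of 1 j] inner_ideal_pos[OF \<nu> 2(2)] h(4,5) by simp
      then have "j \<le> m" using inner_ideal_row1[OF is_partition_tl[OF P] \<nu>] m by simp
      then show ?thesis using True h(4,5) unfolding mem_add_row1 by simp
    next
      case False
      then obtain i1 where "i' = Suc i1" "1 \<le> i1" using h(2) by (cases i') auto
      then show ?thesis
        using down_closedD[OF dc 2(2), of i1 j'] h(3-5) 2(1) unfolding mem_add_row1 by simp
    qed
  qed
qed

lemma add_row1_in_inner_ideals:
  assumes \<nu>: "\<nu> \<in> inner_ideals (tl L)" and m: "row1_len \<nu> \<le> m" "m < part L 2"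
  shows "add_row1 m \<nu> \<in> inner_ideals L" "row1_len (add_row1 m \<nu>) = m"
    "drop_row1 (add_row1 m \<nu>) = \<nu>"
proof -
  have sub: "\<nu> \<subseteq> inner_diagram (tl L)" using \<nu> unfolding inner_ideals_def by auto
  have pos: "1 \<le> i" if "(i, j) \<in> \<nu>" for i j using inner_ideal_pos[OF \<nu> that] by simp
  have "add_row1 m \<nu> \<subseteq> inner_diagram L"
    using m(2) sub unfolding add_row1_def inner_diagram_eq_row1_tl[OF P] by auto
  then show "add_row1 m \<nu> \<in> inner_ideals L"
    using down_closed_add_row1[OF \<nu> m(1)] unfolding inner_ideals_def by simp
  have "{c \<in> add_row1 m \<nu>. fst c = 1} = {1} \<times> {1..m}"
    by (force simp: add_row1_def dest: pos)
  then show "row1_len (add_row1 m \<nu>) = m" by (simp add: row1_len_def card_cartesian_product)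
  show "drop_row1 (add_row1 m \<nu>) = \<nu>"
  proof (rule set_eqI)
    fix c :: cell
    obtain i j where c: "c = (i, j)" by (cases c)
    show "c \<in> drop_row1 (add_row1 m \<nu>) \<longleftrightarrow> c \<in> \<nu>"
      using pos[of i j] unfolding c drop_row1_def mem_add_row1 by auto
  qed
qed

lemma lower_excite_add_row1:
  assumes \<nu>: "\<nu> \<in> inner_ideals (tl L)" and m: "row1_len \<nu> \<le> m"
  shows "{c \<in> excite L (add_row1 m \<nu>). fst c \<noteq> 1} = {2} \<times> {m + 2..part L 2} \<union> apfst Suc ` excite (tl L) \<nu>"
    and "{2} \<times> {m + 2..part L 2} \<inter> apfst Suc ` excite (tl L) \<nu> = {}"
proof -
  have sub: "\<nu> \<subseteq> inner_diagram (tl L)" using \<nu> unfolding inner_ideals_def by auto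
  have pos: "1 \<le> i" if "(i, j) \<in> \<nu>" for i j using inner_ideal_pos[OF \<nu> that] by simp
  have "inner_diagram L - add_row1 m \<nu> = {1} \<times> {Suc m..part L 2 - 1} \<union> apfst Suc ` (inner_diagram (tl L) - \<nu>)"
  proof (rule set_eqI)
    fix c :: cell
    show "c \<in> inner_diagram L - add_row1 m \<nu> \<longleftrightarrow> c \<in> {1} \<times> {Suc m..part L 2 - 1} \<union> apfst Suc ` (inner_diagram (tl L) - \<nu>)"
      unfolding inner_diagram_eq_row1_tl[OF P] add_row1_def
      by (cases c rule: cell_row_cases) (auto simp: mem_inner_diagram dest: pos)
  qed
  moreover have "Suc ` {Suc m..part L 2 - 1} = {m + 2..part L 2}" by (cases "part L 2") simp_all
  ultimately have shifted: "map_prod Suc Suc ` (inner_diagram L - add_row1 m \<nu>) =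
      {2} \<times> {m + 2..part L 2} \<union> apfst Suc ` map_prod Suc Suc ` (inner_diagram (tl L) - \<nu>)"
    by (simp only: map_prod_Suc_row1_tl)
  have "excite L (add_row1 m \<nu>) = {1} \<times> {1..m} \<union> ({2} \<times> {m + 2..part L 2} \<union> apfst Suc ` excite (tl L) \<nu>)"
    unfolding excite_def[of L] shifted unfolding add_row1_def excite_def image_Un by blast
  moreover have "1 \<le> fst c" if "c \<in> excite (tl L) \<nu>" for c
  proof -
    have "c \<in> diagram (tl L)" using excite_subset_diagram[OF is_partition_tl[OF P] \<nu>] that by blast
    then show ?thesis by (cases c) (simp add: mem_diagram)
  qed
  ultimately show "{c \<in> excite L (add_row1 m \<nu>). fst c \<noteq> 1} = {2} \<times> {m + 2..part L 2} \<union> apfst Suc ` excite (tl L) \<nu>"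
    by force
  have "(1, j) \<notin> excite (tl L) \<nu>" if "m < j" for j
  proof
    assume "(1, j) \<in> excite (tl L) \<nu>"
    then have "(1, j) \<in> {c \<in> excite (tl L) \<nu>. fst c = 1}" by simp
    then have "(1, j) \<in> \<nu>" unfolding excite_row1 by simp
    then show False using inner_ideal_row1[OF is_partition_tl[OF P] \<nu>, of j] that m by simp
  qed
  then show "{2} \<times> {m + 2..part L 2} \<inter> apfst Suc ` excite (tl L) \<nu> = {}"
    by (auto simp: numeral_2_eq_2)
qed


lemma prod_hook_apfst_Suc:
  assumes "\<nu> \<in> inner_ideals (tl L)"
  shows "(\<Prod>c \<in> apfst Suc ` excite (tl L) \<nu>. hook L c) = (\<Prod>c \<in> excite (tl L) \<nu>. hook (tl L) c)"
proof -
  have "(\<Prod>c \<in> apfst Suc ` excite (tl L) \<nu>. hook L c) = (\<Prod>c \<in> excite (tl L) \<nu>. hook L (apfst Suc c))"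
    using prod.reindex[OF inj_on_subset[OF _ subset_UNIV, of "apfst Suc" "excite (tl L) \<nu>"], of "hook L"]
    by (simp add: comp_def)
  also have "\<dots> = (\<Prod>c \<in> excite (tl L) \<nu>. hook (tl L) c)"
  proof (rule prod.cong[OF refl])
    fix c assume "c \<in> excite (tl L) \<nu>"
    then have "c \<in> diagram (tl L)" using excite_subset_diagram[OF is_partition_tl[OF P] assms] by blast
    then show "hook L (apfst Suc c) = hook (tl L) c" using hook_tl[OF P] by (cases c) simp
  qed
  finally show ?thesis .
qed

lemma prod_hook_lower_excite_add_row1:
  assumes \<nu>: "\<nu> \<in> inner_ideals (tl L)" and m: "row1_len \<nu> \<le> m"
  shows "(\<Prod>c \<in> {c \<in> excite L (add_row1 m \<nu>). fst c \<noteq> 1}. hook L c)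
    = row2_hooks L m * (\<Prod>c \<in> excite (tl L) \<nu>. hook (tl L) c)"
proof -
  have "finite (excite (tl L) \<nu>)"
    using excite_subset_diagram[OF is_partition_tl[OF P] \<nu>] finite_diagram[OF is_partition_tl[OF P]]
    by (rule finite_subset)
  moreover have "(\<Prod>c \<in> {2} \<times> {m + 2..part L 2}. hook L c) = row2_hooks L m"
    unfolding row2_hooks_def Times_insert_left by (simp add: prod.reindex inj_on_def)
  ultimately show ?thesis
    unfolding lower_excite_add_row1(1)[OF \<nu> m] prod_hook_apfst_Suc[OF \<nu>, symmetric]
    using lower_excite_add_row1(2)[OF \<nu> m] by (subst prod.union_disjoint) auto
qed

lemma lower_hook_sum_rec:
  assumes m: "m < part L 2"
  shows "lower_hook_sum L m = row2_hooks L m * (\<Sum>m' \<le> m. hook_sum (tl L) m')"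
proof -
  define X where "X = {\<nu> \<in> inner_ideals L. row1_len \<nu> = m}"
  define Y where "Y = {\<nu> \<in> inner_ideals (tl L). row1_len \<nu> \<le> m}"
  define wt where "wt \<nu> = (\<Prod>c \<in> excite (tl L) \<nu>. hook (tl L) c)" for \<nu>
  have "X = add_row1 m ` Y"
  proof
    show "X \<subseteq> add_row1 m ` Y"
      using add_row1_drop_row1 drop_row1_in_inner_ideals unfolding X_def Y_def by force
    show "add_row1 m ` Y \<subseteq> X"
      using add_row1_in_inner_ideals m unfolding X_def Y_def by auto
  qed
  moreover have "inj_on (add_row1 m) Y"
    using add_row1_in_inner_ideals(3) m unfolding Y_def by (metis (mono_tags, lifting) inj_onI mem_Collect_eq)
  ultimately have "lower_hook_sum L m = (\<Sum>\<nu> \<in> Y. row2_hooks L m * wt \<nu>)"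
    unfolding lower_hook_sum_def X_def[symmetric] wt_def
    using prod_hook_lower_excite_add_row1 by (simp add: sum.reindex Y_def)
  moreover have "(\<Sum>\<nu> \<in> Y. wt \<nu>) = (\<Sum>m' \<le> m. \<Sum>\<nu> \<in> {\<nu> \<in> Y. row1_len \<nu> = m'}. wt \<nu>)"
    using finite_inner_ideals[OF is_partition_tl[OF P]] unfolding Y_def by (intro sum.group[symmetric]) auto
  moreover have "{\<nu> \<in> Y. row1_len \<nu> = m'} = {\<nu> \<in> inner_ideals (tl L). row1_len \<nu> = m'}" if "m' \<le> m" for m'
    unfolding Y_def using that by auto
  ultimately show ?thesis
    unfolding hook_sum_def wt_def by (simp add: sum_distrib_left[symmetric])
qed

end


section \<open>The growth inequality\<close>

definition hook_sum_ineq :: "nat list \<Rightarrow> nat \<Rightarrow> bool" where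
  "hook_sum_ineq L r \<longleftrightarrow>
     (conj_part L (Suc r) - 1) * (\<Sum>m<r. hook_sum L m) + part L 1 * hook_sum L 0 \<le> (part L 1 - r) * hook_sum L r"

context
  fixes L :: "nat list"
  assumes P: "is_partition L"
begin

lemma conj_part_ge_2: "1 \<le> j \<Longrightarrow> j \<le> part L 2 \<Longrightarrow> 2 \<le> conj_part L j"
  using mem_diagram[of 2 j L] mem_diagram_conj[OF P, of 2 j] by simp

lemma conj_part_ge_3_iff: "1 \<le> j \<Longrightarrow> 3 \<le> conj_part L j \<longleftrightarrow> j \<le> part L 3"
  using mem_diagram[of 3 j L] mem_diagram_conj[OF P, of 3 j] by simp

text \<open>Arranged additively so that no truncated subtraction occurs.\<close>

lemma lower_hook_sum_step_eq:
  assumes r: "Suc r < part L 2"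
  shows "lower_hook_sum L r + (part L 2 - Suc r) * (row2_hooks L (Suc r) * hook_sum (tl L) (Suc r)) =
    (part L 2 - Suc r) * lower_hook_sum L (Suc r) +
    (conj_part L (r + 2) - 2) * (row2_hooks L (Suc r) * (\<Sum>m \<le> r. hook_sum (tl L) m))"
proof -
  define k where "k = part L 2 - Suc r"
  define T where "T = conj_part L (r + 2) - 2"
  define B where "B = row2_hooks L (Suc r)"
  define S where "S = (\<Sum>m \<le> r. hook_sum (tl L) m)"
  have d: "(2, r + 2) \<in> diagram L" using r by (simp add: mem_diagram)
  have "2 \<le> conj_part L (r + 2)" using conj_part_ge_2[of "r + 2"] r by simp
  then have "hook L (2, r + 2) = k + T"
    using hook_eq[OF P d] r unfolding k_def T_def by simp
  then have "lower_hook_sum L r = (k + T) * B * S"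
    using lower_hook_sum_rec[OF P, of r] row2_hooks_step[of r L] r unfolding B_def S_def by simp
  moreover have "lower_hook_sum L (Suc r) = B * (S + hook_sum (tl L) (Suc r))"
    using lower_hook_sum_rec[OF P, of "Suc r"] r unfolding B_def S_def by simp
  ultimately show ?thesis
    unfolding k_def[symmetric] T_def[symmetric] B_def[symmetric] S_def[symmetric]
    by (simp add: algebra_simps)
qed

text \<open>The hypothesis on \<open>tl L\<close> is the induction hypothesis of \<open>hook_sum_ineq_holds\<close>.\<close>

lemma lower_hook_sum_step:
  assumes r: "Suc r < part L 2" and tl_ineq: "Suc r < part L 3 \<Longrightarrow> hook_sum_ineq (tl L) (Suc r)"
  shows "lower_hook_sum L r \<le> (part L 2 - Suc r) * lower_hook_sum L (Suc r)"
    and "lower_hook_sum L r = (part L 2 - Suc r) * lower_hook_sum L (Suc r) \<longleftrightarrow> part L 3 \<le> Suc r"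
proof -
  define k where "k = part L 2 - Suc r"
  define T where "T = conj_part L (r + 2) - 2"
  define B where "B = row2_hooks L (Suc r)"
  define S where "S = (\<Sum>m \<le> r. hook_sum (tl L) m)"
  define g where "g = hook_sum (tl L)"
  have step: "lower_hook_sum L r + k * (B * g (Suc r)) = k * lower_hook_sum L (Suc r) + T * (B * S)"
    using lower_hook_sum_step_eq[OF r] unfolding k_def T_def B_def S_def g_def .
  have "lower_hook_sum L r \<le> k * lower_hook_sum L (Suc r) \<and>
      (lower_hook_sum L r = k * lower_hook_sum L (Suc r) \<longleftrightarrow> part L 3 \<le> Suc r)"
  proof (cases "part L 3 \<le> Suc r")
    case True
    then have "T = 0" using conj_part_ge_3_iff[of "r + 2"] unfolding T_def by simp
    moreover have "g (Suc r) = 0"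
      using hook_sum_eq_0[OF is_partition_tl[OF P], of "Suc r"] part_tl[of 2 L] True
      unfolding g_def by (simp add: numeral_3_eq_3 numeral_2_eq_2)
    ultimately show ?thesis using step True by simp
  next
    case False
    have "hook_sum_ineq (tl L) (Suc r)" using tl_ineq False by simp
    moreover have "conj_part (tl L) (Suc (Suc r)) - 1 = T" "part (tl L) 1 = part L 2"
      using conj_part_tl[OF P] part_tl[of 1 L] unfolding T_def by (simp_all add: numeral_2_eq_2)
    moreover have "(\<Sum>m<Suc r. g m) = S" unfolding S_def g_def using lessThan_Suc_atMost by simp
    ultimately have "T * S + part L 2 * g 0 \<le> k * g (Suc r)"
      unfolding hook_sum_ineq_def k_def g_def by simp
    then have "B * (T * S + part L 2 * g 0) \<le> B * (k * g (Suc r))"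
      by (rule mult_le_mono2)
    then have "T * (B * S) + B * (part L 2 * g 0) \<le> k * (B * g (Suc r))"
      by (simp add: algebra_simps)
    moreover have "0 < B * (part L 2 * g 0)"
      using row2_hooks_pos[OF P] hook_sum_0_pos[OF is_partition_tl[OF P]] r unfolding B_def g_def by simp
    ultimately have "lower_hook_sum L r < k * lower_hook_sum L (Suc r)"
      using step by linarith
    then show ?thesis using False by simp
  qed
  then show "lower_hook_sum L r \<le> (part L 2 - Suc r) * lower_hook_sum L (Suc r)"
    and "lower_hook_sum L r = (part L 2 - Suc r) * lower_hook_sum L (Suc r) \<longleftrightarrow> part L 3 \<le> Suc r"
    unfolding k_def by simp_all
qed

lemma hook_sum_step:
  assumes r: "Suc r < part L 2" and le: "lower_hook_sum L r \<le> (part L 2 - Suc r) * lower_hook_sum L (Suc r)"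
  shows "hook_sum L r * hook L (1, Suc r) \<le> (part L 2 - Suc r) * hook_sum L (Suc r)"
proof -
  have "hook_sum L r * hook L (1, Suc r) = row1_hooks L (Suc r) * lower_hook_sum L r"
    using hook_sum_eq_row1_hooks[OF P] row1_hooks_Suc by simp
  also have "\<dots> \<le> row1_hooks L (Suc r) * ((part L 2 - Suc r) * lower_hook_sum L (Suc r))"
    using le by (rule mult_le_mono2)
  also have "\<dots> = (part L 2 - Suc r) * hook_sum L (Suc r)"
    using hook_sum_eq_row1_hooks[OF P] by simp
  finally show ?thesis .
qed

lemma hook_sum_ineq_of_steps:
  assumes r: "1 \<le> r" "r < part L 2"
    and steps: "\<And>k. Suc k \<le> r \<Longrightarrow> lower_hook_sum L k \<le> (part L 2 - Suc k) * lower_hook_sum L (Suc k)"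
  shows "hook_sum_ineq L r"
proof -
  define t where "t = conj_part L (Suc r) - 1"
  have rows: "part L 2 \<le> part L 1" using part_antimono[OF P, of 1 2] by simp
  have "2 \<le> conj_part L (Suc r)" using conj_part_ge_2[of "Suc r"] r by simp
  have "t * (\<Sum>m'<m. hook_sum L m') + part L 1 * hook_sum L 0 \<le> (part L 1 - m) * hook_sum L m"
    if "m \<le> r" for m
    using that
  proof (induction m)
    case (Suc m)
    have "(1, Suc m) \<in> diagram L" using Suc.prems r rows by (simp add: mem_diagram)
    moreover have "conj_part L (Suc r) \<le> conj_part L (Suc m)"
      using conj_part_antimono[OF P, of "Suc m" "Suc r"] Suc.prems by simp
    ultimately have hook1: "part L 1 - m + t \<le> hook L (1, Suc m)"
      using hook_eq[OF P, of 1 "Suc m"] \<open>2 \<le> conj_part L (Suc r)\<close> Suc.prems r rows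
      unfolding t_def by simp
    have "t * (\<Sum>m'<Suc m. hook_sum L m') + part L 1 * hook_sum L 0
        = (t * (\<Sum>m'<m. hook_sum L m') + part L 1 * hook_sum L 0) + t * hook_sum L m"
      by (simp add: algebra_simps)
    also have "\<dots> \<le> (part L 1 - m + t) * hook_sum L m"
      using Suc by (simp add: algebra_simps)
    also have "\<dots> \<le> hook_sum L m * hook L (1, Suc m)"
      using hook1 by (simp add: mult.commute)
    also have "\<dots> \<le> (part L 2 - Suc m) * hook_sum L (Suc m)"
      using hook_sum_step[of m] steps[of m] Suc.prems r by simp
    also have "\<dots> \<le> (part L 1 - Suc m) * hook_sum L (Suc m)"
      using rows by (intro mult_le_mono1) simp
    finally show ?case .
  qed simp
  then show ?thesis unfolding hook_sum_ineq_def t_def by simp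
qed

end

theorem hook_sum_ineq_holds:
  "is_partition L \<Longrightarrow> 1 \<le> r \<Longrightarrow> r < part L 2 \<Longrightarrow> hook_sum_ineq L r"
proof (induction L arbitrary: r)
  case Nil
  then show ?case by (simp add: part_def)
next
  case (Cons x L)
  have tl: "is_partition L" using is_partition_tl[OF Cons.prems(1)] by simp
  have rows: "part L 2 = part (x # L) 3" using part_tl[of 2 "x # L"] by (simp add: numeral_3_eq_3)
  have "lower_hook_sum (x # L) k \<le> (part (x # L) 2 - Suc k) * lower_hook_sum (x # L) (Suc k)"
    if "Suc k \<le> r" for k
  proof (rule lower_hook_sum_step(1)[OF Cons.prems(1)])
    show "Suc k < part (x # L) 2" using that Cons.prems by simp
    show "Suc k < part (x # L) 3 \<Longrightarrow> hook_sum_ineq (tl (x # L)) (Suc k)"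
      using Cons.IH[OF tl, of "Suc k"] rows by simp
  qed
  then show ?case by (rule hook_sum_ineq_of_steps[OF Cons.prems])
qed

lemma lower_hook_sum_Suc:
  assumes P: "is_partition L" and r: "Suc r < part L 2"
  shows "lower_hook_sum L r \<le> (part L 2 - Suc r) * lower_hook_sum L (Suc r)"
    and "lower_hook_sum L r = (part L 2 - Suc r) * lower_hook_sum L (Suc r) \<longleftrightarrow> part L 3 \<le> Suc r"
proof -
  have "Suc r < part L 3 \<Longrightarrow> hook_sum_ineq (tl L) (Suc r)"
    using hook_sum_ineq_holds[OF is_partition_tl[OF P], of "Suc r"] part_tl[of 2 L]
    by (simp add: numeral_3_eq_3 numeral_2_eq_2)
  then show "lower_hook_sum L r \<le> (part L 2 - Suc r) * lower_hook_sum L (Suc r)"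
    and "lower_hook_sum L r = (part L 2 - Suc r) * lower_hook_sum L (Suc r) \<longleftrightarrow> part L 3 \<le> Suc r"
    using lower_hook_sum_step[OF P r] by blast+
qed


section \<open>The Naruse--Newton coefficients\<close>

lemma lower_hook_sum_pos:
  assumes P: "is_partition L" and m: "m < part L 2"
  shows "0 < lower_hook_sum L m"
proof -
  have "hook_sum (tl L) 0 \<le> (\<Sum>m' \<le> m. hook_sum (tl L) m')" by (rule member_le_sum) auto
  then show ?thesis
    using lower_hook_sum_rec[OF P m] row2_hooks_pos[OF P] hook_sum_0_pos[OF is_partition_tl[OF P]] by simp
qed

lemma excited_hook_sum_eq_lower_hook_sum:
  assumes P: "is_partition L" and \<mu>: "diagram \<mu> = inner_diagram L"
  shows "(\<Sum>D \<in> {D \<in> excited L \<mu>. card {c \<in> D. fst c = 1} = k}. \<Prod>c \<in> {c \<in> D. fst c \<noteq> 1}. hook L c)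
    = lower_hook_sum L k"
proof -
  have "{D \<in> excite L ` inner_ideals L. card {c \<in> D. fst c = 1} = k} =
      excite L ` {\<nu> \<in> inner_ideals L. card {c \<in> excite L \<nu>. fst c = 1} = k}"
    by auto
  then have "{D \<in> excited L \<mu>. card {c \<in> D. fst c = 1} = k} = excite L ` {\<nu> \<in> inner_ideals L. row1_len \<nu> = k}"
    unfolding excited_eq_excite_image[OF \<mu> P] row1_len_def excite_row1 .
  moreover have "inj_on (excite L) {\<nu> \<in> inner_ideals L. row1_len \<nu> = k}"
    using inj_on_excite by (rule inj_on_subset) auto
  ultimately show ?thesis unfolding lower_hook_sum_def by (simp add: sum.reindex)
qed

lemma columns_of_height_2:
  assumes P: "is_partition L"
  shows "{j. 1 \<le> j \<and> j \<le> part L 2 \<and> conj_part L j = 2} = {Suc (part L 3)..part L 2}"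
proof (rule set_eqI)
  fix j
  show "j \<in> {j. 1 \<le> j \<and> j \<le> part L 2 \<and> conj_part L j = 2} \<longleftrightarrow> j \<in> {Suc (part L 3)..part L 2}"
    using conj_part_ge_2[OF P, of j] conj_part_ge_3_iff[OF P, of j] by auto
qed

lemma antimono_steps_eq_iff:
  fixes D :: "nat \<Rightarrow> real"
  assumes le: "\<And>j. j < s \<Longrightarrow> D (Suc j) \<le> D j"
    and eq: "\<And>j. j < s \<Longrightarrow> D (Suc j) = D j \<longleftrightarrow> j < w"
    and ab: "a < b" "b \<le> s"
  shows "D a = D b \<longleftrightarrow> b \<le> w"
proof
  assume "D a = D b"
  show "b \<le> w"
  proof (rule ccontr)
    assume "\<not> b \<le> w"
    obtain c where c: "b = Suc c" using ab by (cases b) auto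
    have "D k \<le> D a" if "a \<le> k" "k \<le> c" for k
      using that
    proof (induction k rule: dec_induct)
      case (step n)
      have "D (Suc n) \<le> D n" using le[of n] step.prems c ab by simp
      then show ?case using step.IH step.prems by simp
    qed simp
    then have "D c \<le> D a" using c ab by simp
    moreover have "D (Suc c) \<le> D c" "D (Suc c) \<noteq> D c"
      using le[of c] eq[of c] c ab \<open>\<not> b \<le> w\<close> by simp_all
    ultimately have "D (Suc c) < D a" by linarith
    then show False using \<open>D a = D b\<close> c by simp
  qed
next
  assume "b \<le> w"
  have const: "D k = D a" if "a \<le> k" "k \<le> b" for k
    using that
  proof (induction k rule: dec_induct)
    case (step n)
    have "n < s" "n < w" using step.prems ab \<open>b \<le> w\<close> by simp_all
    then have "D (Suc n) = D n" using eq[of n] by blast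
    then show ?case using step.IH step.prems by simp
  qed simp
  show "D a = D b" using const[of b] ab by simp
qed

lemma ratio_eq_fact_ratio_iff:
  fixes C :: "nat \<Rightarrow> nat"
  assumes pos: "\<And>j. j \<le> s \<Longrightarrow> 0 < C j"
    and step_le: "\<And>j. j < s \<Longrightarrow> C (Suc j) \<le> Suc j * C j"
    and step_eq: "\<And>j. j < s \<Longrightarrow> C (Suc j) = Suc j * C j \<longleftrightarrow> j < w"
    and ab: "a < b" "b \<le> s"
  shows "real (C a) / real (C b) = fact a / fact b \<longleftrightarrow> b \<le> w"
proof -
  define D where "D j = real (C j) / fact j" for j
  have D_step: "D (Suc j) \<le> D j" "D (Suc j) = D j \<longleftrightarrow> j < w" if "j < s" for j
  proof -
    have "D (Suc j) = real (C (Suc j)) / (real (Suc j) * fact j)"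
      unfolding D_def by (simp only: fact_Suc of_nat_mult)
    moreover have "D j = real (Suc j * C j) / (real (Suc j) * fact j)"
      unfolding D_def of_nat_mult by (rule mult_divide_mult_cancel_left[symmetric]) simp
    moreover have "0 < real (Suc j) * fact j" by simp
    ultimately show "D (Suc j) \<le> D j" "D (Suc j) = D j \<longleftrightarrow> j < w"
      using step_le[OF that] step_eq[OF that] by (simp_all only: divide_right_mono of_nat_le_iff
          divide_cancel_right of_nat_eq_iff order_less_imp_not_eq2 simp_thms)
  qed
  have "real (C a) / real (C b) = fact a / fact b \<longleftrightarrow> D a = D b"
    using pos[of a] pos[of b] ab unfolding D_def by (simp add: field_simps)
  also have "\<dots> \<longleftrightarrow> b \<le> w"
    by (rule antimono_steps_eq_iff[OF D_step ab])
  finally show ?thesis .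
qed

theorem corollary4p6:
  fixes I :: "nat set" and a b :: nat
  assumes "finite I" and "I \<noteq> {}" and "0 \<notin> I"
    and "a < b" and "b \<le> sI I"
  shows "real (NN_coeff I a) / real (NN_coeff I b) = fact a / fact b \<longleftrightarrow> b \<le> wI I"
proof -
  interpret descent_set I using assms(1-3) by unfold_locales
  define L where "L = lamI I"
  define s where "s = sI I"
  have P: "is_partition L" and rows: "part L 2 = Suc s"
    using lamI_spec assms(4,5) unfolding L_def s_def sI_def by auto
  have NN: "NN_coeff I j = lower_hook_sum L (s - j)" for j
    using excited_hook_sum_eq_lower_hook_sum[OF P] diagram_muI unfolding NN_coeff_def L_def s_def by simp
  have w: "wI I = Suc s - part L 3"
    using columns_of_height_2[OF P] rows unfolding wI_def L_def s_def by simp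
  show ?thesis
    unfolding NN w
  proof (rule ratio_eq_fact_ratio_iff)
    show "0 < lower_hook_sum L (s - j)" if "j \<le> s" for j
      using lower_hook_sum_pos[OF P] rows by simp
    fix j assume "j < s"
    then have r: "Suc (s - Suc j) < part L 2" "part L 2 - Suc (s - Suc j) = Suc j" "Suc (s - Suc j) = s - j"
      using rows by auto
    show "lower_hook_sum L (s - Suc j) \<le> Suc j * lower_hook_sum L (s - j)"
      using lower_hook_sum_Suc(1)[OF P r(1)] r by simp
    show "lower_hook_sum L (s - Suc j) = Suc j * lower_hook_sum L (s - j) \<longleftrightarrow> j < Suc s - part L 3"
      using lower_hook_sum_Suc(2)[OF P r(1)] r by auto
  qed (use assms(4,5) in \<open>simp_all add: s_def\<close>)
qed

end
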